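(* Let $(\mathfrak{g},\langle\cdot,\cdot\rangle)$ be an Einstein Lorentzian solvable unimodular Lie algebra whose center $Z(\mathfrak{g})$ is nondegenerate (i.e. the restriction of $\langle\cdot,\cdot\rangle$ to $Z(\mathfrak{g})$ is nondegenerate). Then either $Z(\mathfrak{g})$ is Euclidean (the restriction of $\langle\cdot,\cdot\rangle$ to it is positive definite), or $(\mathfrak{g},\langle\cdot,\cdot\rangle)$ is flat and $\mathfrak{g}=\mathfrak{b}\oplus\mathfrak{a}$ where $\mathfrak{b}$ is an abelian ideal and $\mathfrak{a}$ is an abelian subalgebra of $\mathfrak{g}$, and the Levi-Civita product of $\mathfrak{g}$ satisfies $\mathrm{L}_u=\mathrm{ad}_u$ for $u\in\mathfrak{a}$ and $\mathrm{L}_u=0$ for $u\in\mathfrak{b}$.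
   Context: A Lorentzian Lie algebra is a finite-dimensional real Lie algebra with a nondegenerate symmetric bilinear form $\langle\cdot,\cdot\rangle$ of signature $(1,n-1)$. Unimodular means $\mathrm{tr}(\mathrm{ad}_u)=0$ for all $u$. The Levi-Civita product $\mathrm{L}$ is defined by $2\langle \mathrm{L}_uv,w\rangle=\langle[u,v],w\rangle+\langle[w,u],v\rangle+\langle[w,v],u\rangle$; the curvature is $K(u,v)=\mathrm{L}_{[u,v]}-[\mathrm{L}_u,\mathrm{L}_v]$, and $\mathfrak{g}$ is flat if $K=0$. The Ricci operator $\mathrm{Ric}$ is defined by $\langle\mathrm{Ric}(u),v\rangle=\mathrm{tr}(w\mapsto K(u,w)v)$, and $\mathfrak{g}$ is Einstein if $\mathrm{Ric}=\lambda\,\mathrm{Id}$ for some $\lambda\in\mathbb{R}$. *)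

theory Defs
  imports "HOL-Analysis.Analysis"
begin

text \<open>A finite-dimensional real vector space is modelled by a type of class
  euclidean_space (its inner product is only used to define the trace of an
  endomorphism, which is basis independent).\<close>

definition trace :: "('g::euclidean_space \<Rightarrow> 'g) \<Rightarrow> real" where
  "trace f = (\<Sum>b\<in>Basis. inner (f b) b)"

definition lie_algebra :: "('g::euclidean_space \<Rightarrow> 'g \<Rightarrow> 'g) \<Rightarrow> bool" where
  "lie_algebra br \<longleftrightarrow> bilinear br \<and> (\<forall>x. br x x = 0) \<and>
     (\<forall>x y z. br x (br y z) + br y (br z x) + br z (br x y) = 0)"

definition nondegenerate_on :: "('g \<Rightarrow> 'g \<Rightarrow> real) \<Rightarrow> 'g::real_vector set \<Rightarrow> bool" where
  "nondegenerate_on B V \<longleftrightarrow> (\<forall>u\<in>V. (\<forall>v\<in>V. B u v = 0) \<longrightarrow> u = 0)"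

definition neg_definite_on :: "('g \<Rightarrow> 'g \<Rightarrow> real) \<Rightarrow> 'g::real_vector set \<Rightarrow> bool" where
  "neg_definite_on B V \<longleftrightarrow> (\<forall>v\<in>V. v \<noteq> 0 \<longrightarrow> B v v < 0)"

definition pos_definite_on :: "('g \<Rightarrow> 'g \<Rightarrow> real) \<Rightarrow> 'g::real_vector set \<Rightarrow> bool" where
  "pos_definite_on B V \<longleftrightarrow> (\<forall>v\<in>V. v \<noteq> 0 \<longrightarrow> B v v > 0)"

text \<open>Lorentzian: nondegenerate symmetric bilinear form of signature (1,n-1),
  i.e. the maximal dimension of a negative definite subspace is exactly 1.\<close>
definition lorentzian :: "('g::euclidean_space \<Rightarrow> 'g \<Rightarrow> real) \<Rightarrow> bool" where
  "lorentzian B \<longleftrightarrow> bilinear B \<and> (\<forall>u v. B u v = B v u) \<and> nondegenerate_on B UNIV \<and>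
     (\<exists>V. subspace V \<and> dim V = 1 \<and> neg_definite_on B V) \<and>
     (\<forall>V. subspace V \<and> neg_definite_on B V \<longrightarrow> dim V \<le> 1)"

definition unimodular :: "('g::euclidean_space \<Rightarrow> 'g \<Rightarrow> 'g) \<Rightarrow> bool" where
  "unimodular br \<longleftrightarrow> (\<forall>u. trace (br u) = 0)"

primrec derived_series :: "('g::real_vector \<Rightarrow> 'g \<Rightarrow> 'g) \<Rightarrow> nat \<Rightarrow> 'g set" where
  "derived_series br 0 = UNIV"
| "derived_series br (Suc k) =
     span {br x y | x y. x \<in> derived_series br k \<and> y \<in> derived_series br k}"

definition solvable :: "('g::real_vector \<Rightarrow> 'g \<Rightarrow> 'g) \<Rightarrow> bool" where
  "solvable br \<longleftrightarrow> (\<exists>k. derived_series br k = {0})"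

definition center :: "('g::real_vector \<Rightarrow> 'g \<Rightarrow> 'g) \<Rightarrow> 'g set" where
  "center br = {z. \<forall>x. br z x = 0}"

definition LC :: "('g::real_vector \<Rightarrow> 'g \<Rightarrow> 'g) \<Rightarrow> ('g \<Rightarrow> 'g \<Rightarrow> real) \<Rightarrow> 'g \<Rightarrow> 'g \<Rightarrow> 'g" where
  "LC br B u v = (THE x. \<forall>w. 2 * B x w = B (br u v) w + B (br w u) v + B (br w v) u)"

definition curv :: "('g::real_vector \<Rightarrow> 'g \<Rightarrow> 'g) \<Rightarrow> ('g \<Rightarrow> 'g \<Rightarrow> real) \<Rightarrow> 'g \<Rightarrow> 'g \<Rightarrow> 'g \<Rightarrow> 'g" where
  "curv br B u v w = LC br B (br u v) w - (LC br B u (LC br B v w) - LC br B v (LC br B u w))"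

definition flat :: "('g::real_vector \<Rightarrow> 'g \<Rightarrow> 'g) \<Rightarrow> ('g \<Rightarrow> 'g \<Rightarrow> real) \<Rightarrow> bool" where
  "flat br B \<longleftrightarrow> (\<forall>u v w. curv br B u v w = 0)"

definition ricci :: "('g::euclidean_space \<Rightarrow> 'g \<Rightarrow> 'g) \<Rightarrow> ('g \<Rightarrow> 'g \<Rightarrow> real) \<Rightarrow> 'g \<Rightarrow> 'g" where
  "ricci br B u = (THE x. \<forall>v. B x v = trace (\<lambda>w. curv br B u w v))"

definition einstein :: "('g::euclidean_space \<Rightarrow> 'g \<Rightarrow> 'g) \<Rightarrow> ('g \<Rightarrow> 'g \<Rightarrow> real) \<Rightarrow> bool" where
  "einstein br B \<longleftrightarrow> (\<exists>c::real. \<forall>u. ricci br B u = c *\<^sub>R u)"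

definition abelian_on :: "('g::real_vector \<Rightarrow> 'g \<Rightarrow> 'g) \<Rightarrow> 'g set \<Rightarrow> bool" where
  "abelian_on br S \<longleftrightarrow> (\<forall>x\<in>S. \<forall>y\<in>S. br x y = 0)"

definition lie_subalgebra :: "('g::real_vector \<Rightarrow> 'g \<Rightarrow> 'g) \<Rightarrow> 'g set \<Rightarrow> bool" where
  "lie_subalgebra br S \<longleftrightarrow> subspace S \<and> (\<forall>x\<in>S. \<forall>y\<in>S. br x y \<in> S)"

definition lie_ideal :: "('g::real_vector \<Rightarrow> 'g \<Rightarrow> 'g) \<Rightarrow> 'g set \<Rightarrow> bool" where
  "lie_ideal br S \<longleftrightarrow> subspace S \<and> (\<forall>x. \<forall>y\<in>S. br x y \<in> S)"

end

(*
  If the centre is not Euclidean then, being nondegenerate, it contains a unit timelike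
  vector z0, and the orthogonal complement of z0 is Euclidean.  In a signed orthonormal
  basis through z0, Milnor's formula gives <Ric z0, z0> = 1/4 sum <[e,f], z0>^2 >= 0, so the
  Einstein constant is <= 0.  Let J be the last term of the derived series not contained
  in the line of z0.  Summed over an orthonormal basis of the Euclidean part of J + R z0,
  the negative terms of Milnor's formula cancel against positive ones, so the constant is
  also >= 0.  Hence the algebra is Ricci-flat, all brackets are orthogonal to z0, and the
  complement of z0 is a Ricci-flat Euclidean unimodular solvable algebra with the same
  derived algebra b.  By the Alekseevskii-Kimel'fel'd argument b is abelian and ad u is
  skew for u orthogonal to b; for a = b^perp the Koszul formula then gives L_u = ad_u on a
  and L_u = 0 on b, and flatness follows.
*)

theory Submission
  imports Defs
begin

lemma trace_add: "trace (\<lambda>w. f w + g w) = trace f + trace g"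
  by (simp add: trace_def inner_add_left sum.distrib)

lemma trace_scale: "trace (\<lambda>w. c *\<^sub>R f w) = c * trace f"
  by (simp add: trace_def sum_distrib_left)

lemma double_sum_antisym_eq_0:
  fixes D :: "'a \<Rightarrow> 'a \<Rightarrow> real"
  assumes "\<And>e f. D e f = - D f e"
  shows "(\<Sum>e\<in>S. \<Sum>f\<in>S. w e * w f * D e f) = 0"
proof -
  have "(\<Sum>e\<in>S. \<Sum>f\<in>S. w e * w f * D e f) = (\<Sum>f\<in>S. \<Sum>e\<in>S. w e * w f * D e f)"
    by (rule sum.swap)
  also have "\<dots> = (\<Sum>f\<in>S. \<Sum>e\<in>S. - (w f * w e * D f e))"
  proof (intro sum.cong refl)
    fix f e show "w e * w f * D e f = - (w f * w e * D f e)" using assms[of e f] by simp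
  qed
  also have "\<dots> = - (\<Sum>f\<in>S. \<Sum>e\<in>S. w f * w e * D f e)" by (simp add: sum_negf)
  finally show ?thesis by simp
qed

locale lie_algebra_with_form =
  fixes br :: "'g::euclidean_space \<Rightarrow> 'g \<Rightarrow> 'g" and B :: "'g \<Rightarrow> 'g \<Rightarrow> real"
  assumes lie: "lie_algebra br" and bilinear_B: "bilinear B" and B_sym: "\<And>u v. B u v = B v u"
begin

lemma bilinear_br: "bilinear br"
  using lie by (simp add: lie_algebra_def)

lemma br_self [simp]: "br x x = 0"
  using lie by (simp add: lie_algebra_def)

lemma jacobi: "br x (br y z) + br y (br z x) + br z (br x y) = 0"
  using lie by (simp add: lie_algebra_def)

lemmas br_simps [simp] =
  bilinear_ladd[OF bilinear_br] bilinear_radd[OF bilinear_br]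
  bilinear_lmul[OF bilinear_br] bilinear_rmul[OF bilinear_br]
  bilinear_lneg[OF bilinear_br] bilinear_rneg[OF bilinear_br]
  bilinear_lsub[OF bilinear_br] bilinear_rsub[OF bilinear_br]
  bilinear_lzero[OF bilinear_br] bilinear_rzero[OF bilinear_br]

lemmas B_simps [simp] =
  bilinear_ladd[OF bilinear_B] bilinear_radd[OF bilinear_B]
  bilinear_lmul[OF bilinear_B] bilinear_rmul[OF bilinear_B]
  bilinear_lneg[OF bilinear_B] bilinear_rneg[OF bilinear_B]
  bilinear_lsub[OF bilinear_B] bilinear_rsub[OF bilinear_B]
  bilinear_lzero[OF bilinear_B] bilinear_rzero[OF bilinear_B]

lemma br_sum_left [simp]: "br (sum f S) y = (\<Sum>i\<in>S. br (f i) y)"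
  by (induction S rule: infinite_finite_induct) auto

lemma br_sum_right [simp]: "br y (sum f S) = (\<Sum>i\<in>S. br y (f i))"
  by (induction S rule: infinite_finite_induct) auto

lemma B_sum_left [simp]: "B (sum f S) y = (\<Sum>i\<in>S. B (f i) y)"
  by (induction S rule: infinite_finite_induct) auto

lemma B_sum_right [simp]: "B y (sum f S) = (\<Sum>i\<in>S. B y (f i))"
  by (induction S rule: infinite_finite_induct) auto

lemma br_antisym: "br y x = - br x y"
proof -
  have "br (x + y) (x + y) = br x x + br y x + (br x y + br y y)"
    by (simp only: br_simps)
  then have "br x y + br y x = 0" by (simp add: add.commute)
  then show ?thesis by (metis add.commute eq_neg_iff_add_eq_0)
qed

lemma linear_br: "linear (br y)"
  using bilinear_br by (simp add: bilinear_def)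

lemma br_derivation: "br u (br a b) = br (br u a) b + br a (br u b)"
  using jacobi[of u a b] by (simp add: br_antisym[of "br b u"] br_antisym[of b u]
      br_antisym[of "br u a" b] algebra_simps)

section \<open>Signed orthonormal bases\<close>

lemma pos_definite_on_subset: "pos_definite_on B V \<Longrightarrow> U \<subseteq> V \<Longrightarrow> pos_definite_on B U"
  unfolding pos_definite_on_def by auto

lemma pos_definite_on_nonneg: "pos_definite_on B V \<Longrightarrow> y \<in> V \<Longrightarrow> 0 \<le> B y y"
  unfolding pos_definite_on_def by (cases "y = 0") (auto intro: less_imp_le)

lemma pos_definite_on_eq_0:
  "pos_definite_on B V \<Longrightarrow> x \<in> V \<Longrightarrow> (\<And>w. w \<in> V \<Longrightarrow> B x w = 0) \<Longrightarrow> x = 0"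
  unfolding pos_definite_on_def by force

text \<open>Signed orthonormal basis of \<open>V\<close>; the expansion clause also makes \<open>E\<close> span \<open>V\<close>.\<close>
definition onb :: "'g set \<Rightarrow> 'g set \<Rightarrow> bool" where
  "onb V E \<longleftrightarrow> finite E \<and> E \<subseteq> V \<and> (\<forall>e\<in>E. \<forall>f\<in>E. e \<noteq> f \<longrightarrow> B e f = 0) \<and>
     (\<forall>e\<in>E. B e e = 1 \<or> B e e = -1) \<and> (\<forall>v\<in>V. v = (\<Sum>e\<in>E. (B e e * B v e) *\<^sub>R e))"

lemma onb_finite: "onb V E \<Longrightarrow> finite E"
  by (simp add: onb_def)

lemma onb_subset: "onb V E \<Longrightarrow> e \<in> E \<Longrightarrow> e \<in> V"
  by (auto simp: onb_def)

lemma onb_sign_square: "onb V E \<Longrightarrow> e \<in> E \<Longrightarrow> B e e * B e e = 1"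
  unfolding onb_def by force

lemma onb_expansion: "onb V E \<Longrightarrow> v \<in> V \<Longrightarrow> v = (\<Sum>e\<in>E. (B e e * B v e) *\<^sub>R e)"
  by (simp add: onb_def)

lemma onb_parseval:
  assumes "onb V E" "v \<in> V"
  shows "B w v = (\<Sum>e\<in>E. B e e * B w e * B v e)"
proof -
  have "B w v = B w (\<Sum>e\<in>E. (B e e * B v e) *\<^sub>R e)"
    using onb_expansion[OF assms] by simp
  then show ?thesis by (simp add: mult.commute mult.left_commute)
qed

lemma onb_linear_expansion:
  assumes "onb V E" "linear X" "y \<in> V"
  shows "B (X y) c = (\<Sum>e\<in>E. B e e * B y e * B (X e) c)"
proof -
  have "X y = X (\<Sum>e\<in>E. (B e e * B y e) *\<^sub>R e)" using onb_expansion[OF assms(1,3)] by simp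
  also have "\<dots> = (\<Sum>e\<in>E. (B e e * B y e) *\<^sub>R X e)"
    by (simp add: linear_sum[OF assms(2)] linear_scale[OF assms(2)])
  finally show ?thesis by simp
qed

lemma onb_UNIV_eq_0: "onb UNIV E \<Longrightarrow> (\<And>w. B x w = 0) \<Longrightarrow> x = 0"
  using onb_expansion[of UNIV E x] by simp

lemma onb_UNIV_eqI: "onb UNIV E \<Longrightarrow> (\<And>w. B x w = B y w) \<Longrightarrow> x = y"
  using onb_UNIV_eq_0[of E "x - y"] by simp

lemma onb_UNIV_riesz:
  assumes "onb UNIV E" "linear \<phi>"
  shows "B (\<Sum>e\<in>E. (B e e * \<phi> e) *\<^sub>R e) w = \<phi> w"
proof -
  have "\<phi> w = \<phi> (\<Sum>e\<in>E. (B e e * B w e) *\<^sub>R e)" using onb_expansion[OF assms(1)] by simp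
  also have "\<dots> = (\<Sum>e\<in>E. (B e e * B w e) * \<phi> e)"
    by (simp add: linear_sum[OF assms(2)] linear_scale[OF assms(2)])
  finally show ?thesis by (simp add: B_sym mult.commute mult.left_commute)
qed

lemma onb_disjoint:
  assumes "onb V1 E1" "onb V2 E2" "\<And>x y. x \<in> V1 \<Longrightarrow> y \<in> V2 \<Longrightarrow> B x y = 0"
  shows "E1 \<inter> E2 = {}"
proof (rule ccontr)
  assume "E1 \<inter> E2 \<noteq> {}"
  then obtain e where "e \<in> E1" "e \<in> E2" by auto
  then have "B e e = 0" using assms onb_subset by blast
  then show False using onb_sign_square[OF assms(1) \<open>e \<in> E1\<close>] by simp
qed

lemma onb_union:
  assumes E1: "onb V1 E1" and E2: "onb V2 E2"
    and orth: "\<And>x y. x \<in> V1 \<Longrightarrow> y \<in> V2 \<Longrightarrow> B x y = 0"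
    and sub: "V1 \<subseteq> V" "V2 \<subseteq> V" and dec: "\<And>v. v \<in> V \<Longrightarrow> \<exists>x\<in>V1. \<exists>y\<in>V2. v = x + y"
  shows "onb V (E1 \<union> E2)"
proof -
  have fin: "finite E1" "finite E2" using E1 E2 onb_finite by auto
  have disj: "E1 \<inter> E2 = {}" by (rule onb_disjoint[OF E1 E2 orth])
  have sub': "E1 \<subseteq> V1" "E2 \<subseteq> V2" using onb_subset[OF E1] onb_subset[OF E2] by auto
  have orth': "\<And>x y. x \<in> V2 \<Longrightarrow> y \<in> V1 \<Longrightarrow> B x y = 0" using orth B_sym by metis
  have "v = (\<Sum>e\<in>E1 \<union> E2. (B e e * B v e) *\<^sub>R e)" if v: "v \<in> V" for v
  proof -
    obtain x y where xy: "x \<in> V1" "y \<in> V2" "v = x + y" using dec[OF v] by auto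
    have "(\<Sum>e\<in>E1. (B e e * B v e) *\<^sub>R e) = (\<Sum>e\<in>E1. (B e e * B x e) *\<^sub>R e)"
      using xy orth' onb_subset[OF E1] by (intro sum.cong) auto
    also have "\<dots> = x" using onb_expansion[OF E1 xy(1)] by simp
    finally have x: "(\<Sum>e\<in>E1. (B e e * B v e) *\<^sub>R e) = x" .
    have "(\<Sum>e\<in>E2. (B e e * B v e) *\<^sub>R e) = (\<Sum>e\<in>E2. (B e e * B y e) *\<^sub>R e)"
      using xy orth onb_subset[OF E2] by (intro sum.cong) auto
    also have "\<dots> = y" using onb_expansion[OF E2 xy(2)] by simp
    finally have y: "(\<Sum>e\<in>E2. (B e e * B v e) *\<^sub>R e) = y" .
    show ?thesis using x y xy fin disj by (simp add: sum.union_disjoint)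
  qed
  moreover have "\<forall>e\<in>E1 \<union> E2. \<forall>f\<in>E1 \<union> E2. e \<noteq> f \<longrightarrow> B e f = 0"
    using E1 E2 sub' orth orth' unfolding onb_def by blast
  ultimately show ?thesis using E1 E2 sub sub' unfolding onb_def by auto
qed

lemma onb_singleton:
  assumes "B e e = 1 \<or> B e e = -1"
  shows "onb (span {e}) {e}"
  unfolding onb_def
proof (intro conjI ballI)
  fix v assume "v \<in> span {e}"
  then obtain c where "v = c *\<^sub>R e" by (auto simp: span_singleton)
  then show "v = (\<Sum>e\<in>{e}. (B e e * B v e) *\<^sub>R e)" using assms by auto
qed (use assms in \<open>auto simp: span_base\<close>)

lemma onb_projection:
  fixes x :: 'g
  assumes "onb U E" "subspace U"
  defines "p \<equiv> (\<Sum>e\<in>E. (B e e * B x e) *\<^sub>R e)"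
  shows "p \<in> U" "\<And>u. u \<in> U \<Longrightarrow> B (x - p) u = 0"
proof -
  show "p \<in> U" unfolding p_def using onb_subset[OF assms(1)] assms(2)
    by (auto intro!: subspace_sum subspace_scale)
  show "B (x - p) u = 0" if u: "u \<in> U" for u
  proof -
    have "B x u = (\<Sum>e\<in>E. B e e * B x e * B u e)" by (rule onb_parseval[OF assms(1) u])
    moreover have "B p u = (\<Sum>e\<in>E. B e e * B x e * B u e)" by (simp add: p_def B_sym)
    ultimately show ?thesis by simp
  qed
qed

lemma orthogonal_decomposition:
  assumes "onb U E" "subspace U" "subspace X" "U \<subseteq> X" "x \<in> X"
  shows "\<exists>q p. x = q + p \<and> q \<in> X \<and> (\<forall>u\<in>U. B q u = 0) \<and> p \<in> U"
proof -
  define p where "p = (\<Sum>e\<in>E. (B e e * B x e) *\<^sub>R e)"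
  have p: "p \<in> U" "\<forall>u\<in>U. B (x - p) u = 0"
    using onb_projection[OF assms(1,2), where x = x] unfolding p_def by auto
  moreover have "x - p \<in> X" using assms(3,4,5) p(1) by (auto intro: subspace_diff)
  ultimately show ?thesis by (intro exI[of _ "x - p"] exI[of _ p]) auto
qed

lemma onb_exists_pos_definite:
  assumes "subspace V" "pos_definite_on B V"
  shows "\<exists>E. onb V E \<and> (\<forall>e\<in>E. B e e = 1)"
  using assms
proof (induction "dim V" arbitrary: V rule: less_induct)
  case less
  show ?case
  proof (cases "V = {0}")
    case True
    then show ?thesis by (auto simp: onb_def)
  next
    case False
    then obtain v where v: "v \<in> V" "v \<noteq> 0" using less.prems subspace_0 by blast
    then have pv: "B v v > 0" using less.prems unfolding pos_definite_on_def by auto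
    define e where "e = (1 / sqrt (B v v)) *\<^sub>R v"
    have ee: "B e e = 1" using pv by (simp add: e_def)
    have eV: "e \<in> V" using v less.prems by (simp add: e_def subspace_scale)
    define V' where "V' = {w \<in> V. B w e = 0}"
    have sV': "subspace V'" using less.prems unfolding V'_def subspace_def by auto
    have "e \<notin> V'" using ee by (simp add: V'_def)
    then have psub: "V' \<subset> V" using eV by (auto simp: V'_def)
    have "dim V' < dim V"
      using dim_psubset[of V' V] psub span_eq_iff[THEN iffD2, OF sV']
        span_eq_iff[THEN iffD2, OF less.prems(1)] by simp
    moreover have "pos_definite_on B V'"
      using less.prems(2) by (rule pos_definite_on_subset) (auto simp: V'_def)
    ultimately obtain E' where E': "onb V' E'" "\<forall>e\<in>E'. B e e = 1" using less.hyps sV' by blast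
    have "onb V ({e} \<union> E')"
    proof (rule onb_union[OF onb_singleton E'(1)])
      show "B x y = 0" if "x \<in> span {e}" "y \<in> V'" for x y
        using that by (auto simp: span_singleton V'_def B_sym)
      show "span {e} \<subseteq> V" using eV less.prems by (simp add: span_minimal)
      show "\<exists>x\<in>span {e}. \<exists>y\<in>V'. w = x + y" if "w \<in> V" for w
      proof (intro bexI)
        show "w = B w e *\<^sub>R e + (w - B w e *\<^sub>R e)" by simp
        show "B w e *\<^sub>R e \<in> span {e}" by (simp add: span_base span_scale)
        show "w - B w e *\<^sub>R e \<in> V'"
          using that eV less.prems ee by (simp add: V'_def subspace_diff subspace_scale)
      qed
    qed (use ee psub in auto)
    then show ?thesis using E'(2) ee by auto
  qed
qed

lemma onb_extend_pos_definite:
  assumes "subspace V" "pos_definite_on B V" "onb U EU" "U \<subseteq> V" "subspace U"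
  shows "\<exists>EW. onb {w \<in> V. \<forall>u\<in>U. B w u = 0} EW \<and> (\<forall>e\<in>EW. B e e = 1) \<and> onb V (EU \<union> EW)"
proof -
  define W where "W = {w \<in> V. \<forall>u\<in>U. B w u = 0}"
  have sW: "subspace W" using assms(1) unfolding W_def subspace_def by auto
  have pW: "pos_definite_on B W" using assms(2) by (rule pos_definite_on_subset) (auto simp: W_def)
  obtain EW where EW: "onb W EW" "\<forall>e\<in>EW. B e e = 1" using onb_exists_pos_definite[OF sW pW] by auto
  have "onb V (EU \<union> EW)"
  proof (rule onb_union[OF assms(3) EW(1) _ assms(4)])
    show "B x y = 0" if "x \<in> U" "y \<in> W" for x y using that by (auto simp: W_def B_sym)
    show "\<exists>x\<in>U. \<exists>y\<in>W. v = x + y" if v: "v \<in> V" for v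
    proof -
      obtain q p where "v = q + p" "q \<in> V" "\<forall>u\<in>U. B q u = 0" "p \<in> U"
        using orthogonal_decomposition[OF assms(3,5,1,4) v] by blast
      then show ?thesis unfolding W_def by (intro bexI[of _ p] bexI[of _ q]) auto
    qed
  qed (auto simp: W_def)
  then show ?thesis using EW W_def by auto
qed

lemma onb_pos_definite_sign:
  assumes "onb V E" "pos_definite_on B V" "e \<in> E"
  shows "B e e = 1"
  using assms onb_subset[OF assms(1,3)] unfolding onb_def pos_definite_on_def by force

lemma onb_pos_definite_sum:
  "onb V E \<Longrightarrow> pos_definite_on B V \<Longrightarrow> (\<Sum>e\<in>E. B e e * f e) = (\<Sum>e\<in>E. f e)"
  using onb_pos_definite_sign by (intro sum.cong) auto

lemma onb_pos_definite_expansion: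
  "onb V E \<Longrightarrow> pos_definite_on B V \<Longrightarrow> v \<in> V \<Longrightarrow> v = (\<Sum>e\<in>E. B v e *\<^sub>R e)"
  using onb_expansion[of V E v] onb_pos_definite_sign[of V E] by (simp cong: sum.cong)

lemma onb_pos_definite_parseval:
  "onb V E \<Longrightarrow> pos_definite_on B V \<Longrightarrow> v \<in> V \<Longrightarrow> B w v = (\<Sum>e\<in>E. B w e * B v e)"
  using onb_parseval[of V E v w] onb_pos_definite_sum[of V E "\<lambda>e. B w e * B v e"]
  by (simp add: mult.assoc)

lemma onb_trace_indep:
  assumes E: "onb V E" and F: "onb V F" and bl: "bilinear (\<beta> :: 'g \<Rightarrow> 'g \<Rightarrow> real)"
  shows "(\<Sum>e\<in>E. B e e * \<beta> e e) = (\<Sum>f\<in>F. B f f * \<beta> f f)"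
proof -
  have lin: "linear (\<beta> x)" "linear (\<lambda>y. \<beta> y x)" for x
    using bl by (simp_all add: bilinear_def)
  have "(\<Sum>e\<in>E. B e e * \<beta> e e) = (\<Sum>e\<in>E. B e e * (\<Sum>f\<in>F. (B f f * B e f) * \<beta> e f))"
  proof (intro sum.cong refl)
    fix e assume "e \<in> E"
    have "\<beta> e e = \<beta> e (\<Sum>f\<in>F. (B f f * B e f) *\<^sub>R f)"
      using onb_expansion[OF F onb_subset[OF E \<open>e \<in> E\<close>]] by simp
    also have "\<dots> = (\<Sum>f\<in>F. (B f f * B e f) * \<beta> e f)"
      by (simp add: linear_sum[OF lin(1)[of e]] linear_scale[OF lin(1)[of e]])
    finally show "B e e * \<beta> e e = B e e * (\<Sum>f\<in>F. (B f f * B e f) * \<beta> e f)" by simp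
  qed
  also have "\<dots> = (\<Sum>f\<in>F. B f f * (\<Sum>e\<in>E. (B e e * B f e) * \<beta> e f))"
    by (simp add: sum_distrib_left sum.swap[of _ E] B_sym mult.commute mult.left_commute)
  also have "\<dots> = (\<Sum>f\<in>F. B f f * \<beta> f f)"
  proof (intro sum.cong refl)
    fix f assume "f \<in> F"
    have "\<beta> f f = \<beta> (\<Sum>e\<in>E. (B e e * B f e) *\<^sub>R e) f"
      using onb_expansion[OF E onb_subset[OF F \<open>f \<in> F\<close>]] by simp
    also have "\<dots> = (\<Sum>e\<in>E. (B e e * B f e) * \<beta> e f)"
      by (simp add: linear_sum[OF lin(2)[of f]] linear_scale[OF lin(2)[of f]])
    finally show "B f f * (\<Sum>e\<in>E. (B e e * B f e) * \<beta> e f) = B f f * \<beta> f f" by simp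
  qed
  finally show ?thesis .
qed

section \<open>Milnor's formula for the Ricci curvature\<close>

text \<open>Milnor's expression for \<open>\<langle>Ric u, u\<rangle>\<close> of a unimodular metric Lie algebra in a
  signed orthonormal basis \<open>E\<close>.\<close>
definition ricci_form :: "'g set \<Rightarrow> 'g \<Rightarrow> real" where
  "ricci_form E u = - (\<Sum>e\<in>E. B e e * B (br u e) (br u e)) / 2
     - (\<Sum>e\<in>E. B e e * B (br u (br u e)) e) / 2
     + (\<Sum>e\<in>E. \<Sum>f\<in>E. B e e * B f f * (B (br e f) u)\<^sup>2) / 4"

lemma ricci_form_basis_indep:
  assumes E: "onb V E" and F: "onb V F"
  shows "ricci_form E x = ricci_form F x"
proof -
  have 1: "(\<Sum>e\<in>E. B e e * B (br x e) (br x e)) = (\<Sum>e\<in>F. B e e * B (br x e) (br x e))"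
    by (rule onb_trace_indep[OF E F, of "\<lambda>e e'. B (br x e) (br x e')"])
       (auto simp: bilinear_def intro!: linearI)
  have 2: "(\<Sum>e\<in>E. B e e * B (br x (br x e)) e) = (\<Sum>e\<in>F. B e e * B (br x (br x e)) e)"
    by (rule onb_trace_indep[OF E F, of "\<lambda>e e'. B (br x (br x e)) e'"])
       (auto simp: bilinear_def intro!: linearI)
  have 3: "(\<Sum>f\<in>E. B f f * (B (br e f) x * B (br e f) x)) =
      (\<Sum>f\<in>F. B f f * (B (br e f) x * B (br e f) x))" for e
    by (rule onb_trace_indep[OF E F, of "\<lambda>f f'. B (br e f) x * B (br e f') x"])
       (auto simp: bilinear_def intro!: linearI simp: algebra_simps)
  have 4: "(\<Sum>e\<in>E. B e e * (\<Sum>f\<in>F. B f f * (B (br e f) x * B (br e f) x))) =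
           (\<Sum>e\<in>F. B e e * (\<Sum>f\<in>F. B f f * (B (br e f) x * B (br e f) x)))"
    by (rule onb_trace_indep[OF E F,
          of "\<lambda>e e'. (\<Sum>f\<in>F. B f f * (B (br e f) x * B (br e' f) x))"])
       (auto simp: bilinear_def intro!: linearI simp: algebra_simps sum.distrib sum_distrib_left)
  have "(\<Sum>e\<in>E. \<Sum>f\<in>E. B e e * B f f * (B (br e f) x)\<^sup>2) =
      (\<Sum>e\<in>E. B e e * (\<Sum>f\<in>E. B f f * (B (br e f) x)\<^sup>2))"
    by (simp add: sum_distrib_left mult.assoc)
  also have "\<dots> = (\<Sum>e\<in>F. B e e * (\<Sum>f\<in>F. B f f * (B (br e f) x)\<^sup>2))"
    using 3 4 by (simp add: power2_eq_square)
  also have "\<dots> = (\<Sum>e\<in>F. \<Sum>f\<in>F. B e e * B f f * (B (br e f) x)\<^sup>2)"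
    by (simp add: sum_distrib_left mult.assoc)
  finally show ?thesis unfolding ricci_form_def using 1 2 by simp
qed

end

locale lie_algebra_onb = lie_algebra_with_form +
  fixes E
  assumes onb_UNIV: "onb UNIV E"
begin

lemma trace_eq_onb_sum:
  assumes "linear f"
  shows "trace f = (\<Sum>e\<in>E. B e e * B (f e) e)"
proof -
  have f_expansion: "f b = (\<Sum>e\<in>E. (B e e * B b e) *\<^sub>R f e)" for b
  proof -
    have "f b = f (\<Sum>e\<in>E. (B e e * B b e) *\<^sub>R e)" using onb_expansion[OF onb_UNIV, of b] by simp
    also have "\<dots> = (\<Sum>e\<in>E. (B e e * B b e) *\<^sub>R f e)"
      by (simp add: linear_sum[OF assms] linear_scale[OF assms])
    finally show ?thesis .
  qed
  have "trace f = (\<Sum>b\<in>Basis. \<Sum>e\<in>E. (B e e * B b e) * inner (f e) b)"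
    unfolding trace_def by (subst f_expansion) (simp add: inner_sum_left)
  also have "\<dots> = (\<Sum>e\<in>E. \<Sum>b\<in>Basis. B e e * (inner (f e) b * B b e))"
    by (subst sum.swap) (simp add: mult.commute mult.left_commute)
  also have "\<dots> = (\<Sum>e\<in>E. B e e * B (\<Sum>b\<in>Basis. inner (f e) b *\<^sub>R b) e)"
    by (simp add: sum_distrib_left)
  also have "\<dots> = (\<Sum>e\<in>E. B e e * B (f e) e)" by (simp add: euclidean_representation)
  finally show ?thesis .
qed

lemma LC_inner: "B (LC br B u v) w = (B (br u v) w + B (br w u) v + B (br w v) u) / 2"
proof -
  define \<phi> where "\<phi> w = (B (br u v) w + B (br w u) v + B (br w v) u) / 2" for w
  have lin: "linear \<phi>"
    by (rule linearI) (simp_all add: \<phi>_def B_sym algebra_simps add_divide_distrib)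
  define x0 where "x0 = (\<Sum>e\<in>E. (B e e * \<phi> e) *\<^sub>R e)"
  have x0: "B x0 w = \<phi> w" for w using onb_UNIV_riesz[OF onb_UNIV lin] by (simp add: x0_def)
  have "LC br B u v = x0"
    unfolding LC_def
  proof (rule the_equality)
    show "\<forall>w. 2 * B x0 w = B (br u v) w + B (br w u) v + B (br w v) u" by (simp add: x0 \<phi>_def)
    fix x assume "\<forall>w. 2 * B x w = B (br u v) w + B (br w u) v + B (br w v) u"
    then have "B x w = B x0 w" for w by (simp add: x0 \<phi>_def) (metis mult.commute)
    then show "x = x0" by (rule onb_UNIV_eqI[OF onb_UNIV])
  qed
  then show ?thesis by (simp add: x0 \<phi>_def)
qed

abbreviation L where "L \<equiv> LC br B"

lemma LC_add_left: "L (u1 + u2) v = L u1 v + L u2 v"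
  by (rule onb_UNIV_eqI[OF onb_UNIV]) (simp add: LC_inner add_divide_distrib)

lemma LC_add_right: "L u (v1 + v2) = L u v1 + L u v2"
  by (rule onb_UNIV_eqI[OF onb_UNIV]) (simp add: LC_inner add_divide_distrib)

lemma LC_scale_left: "L (c *\<^sub>R u) v = c *\<^sub>R L u v"
  by (rule onb_UNIV_eqI[OF onb_UNIV]) (simp add: LC_inner algebra_simps)

lemma LC_scale_right: "L u (c *\<^sub>R v) = c *\<^sub>R L u v"
  by (rule onb_UNIV_eqI[OF onb_UNIV]) (simp add: LC_inner algebra_simps)

lemma bilinear_L: "bilinear L"
  unfolding bilinear_def
  by (simp add: linearI LC_add_left LC_add_right LC_scale_left LC_scale_right)

lemmas L_simps [simp] =
  bilinear_ladd[OF bilinear_L] bilinear_radd[OF bilinear_L]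
  bilinear_lmul[OF bilinear_L] bilinear_rmul[OF bilinear_L]
  bilinear_lneg[OF bilinear_L] bilinear_rneg[OF bilinear_L]
  bilinear_lsub[OF bilinear_L] bilinear_rsub[OF bilinear_L]
  bilinear_lzero[OF bilinear_L] bilinear_rzero[OF bilinear_L]

lemma LC_torsion_free: "L u v - L v u = br u v"
proof (rule onb_UNIV_eqI[OF onb_UNIV])
  fix w
  have "B (br v u) w = - B (br u v) w" by (subst br_antisym) simp
  then show "B (L u v - L v u) w = B (br u v) w" by (simp add: LC_inner field_simps)
qed

lemma LC_skew: "B (L u a) b = - B a (L u b)"
proof -
  have "B (br b a) u = - B (br a b) u" by (subst br_antisym) simp
  moreover have "B (br u a) b = - B (br a u) b" by (subst br_antisym) simp
  moreover have "B (br u b) a = - B (br b u) a" by (subst br_antisym) simp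
  ultimately show ?thesis by (simp add: LC_inner B_sym[of a] field_simps)
qed

lemma ricci_inner: "B (ricci br B u) v = trace (\<lambda>w. curv br B u w v)"
proof -
  define \<phi> where "\<phi> v = trace (\<lambda>w. curv br B u w v)" for v
  have lin: "linear \<phi>"
  proof (rule linearI)
    show "\<phi> (a + b) = \<phi> a + \<phi> b" for a b
      unfolding \<phi>_def curv_def by (simp add: trace_add[symmetric] algebra_simps)
    show "\<phi> (c *\<^sub>R a) = c *\<^sub>R \<phi> a" for c a
      unfolding \<phi>_def curv_def by (simp add: trace_scale[symmetric] algebra_simps)
  qed
  define x0 where "x0 = (\<Sum>e\<in>E. (B e e * \<phi> e) *\<^sub>R e)"
  have x0: "B x0 w = \<phi> w" for w using onb_UNIV_riesz[OF onb_UNIV lin] by (simp add: x0_def)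
  have "ricci br B u = x0"
    unfolding ricci_def
  proof (rule the_equality)
    show "\<forall>v. B x0 v = trace (\<lambda>w. curv br B u w v)" by (simp add: x0 \<phi>_def)
    fix x assume "\<forall>v. B x v = trace (\<lambda>w. curv br B u w v)"
    then have "B x w = B x0 w" for w by (simp add: x0 \<phi>_def)
    then show "x = x0" by (rule onb_UNIV_eqI[OF onb_UNIV])
  qed
  then show ?thesis by (simp add: x0 \<phi>_def)
qed

lemma ricci_quadratic_onb: "B (ricci br B u) u = (\<Sum>e\<in>E. B e e * B (curv br B u e u) e)"
proof -
  have "linear (\<lambda>w. curv br B u w u)"
    by (rule linearI) (simp_all add: curv_def algebra_simps)
  then show ?thesis using ricci_inner trace_eq_onb_sum by simp
qed

lemma curv_diag_expansion:
  fixes u e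
  defines "a \<equiv> \<lambda>e f. B (br u e) f" and "b \<equiv> \<lambda>e f. B (br e f) u"
  shows "B (curv br B u e u) e =
    (\<Sum>f\<in>E. B f f * ((- a e f * a f e + a e f * b e f - a e f * a e f) / 2
       + ((a e f - a f e + b f e) / 2)\<^sup>2 - a e f * ((a e f - a f e + b f e) / 2)))
    + B (L e (L u u)) e"
proof -
  have parseval: "B x y = (\<Sum>f\<in>E. B f f * B x f * B y f)" for x y
    using onb_parseval[OF onb_UNIV, of y x] by simp
  have bracket_expansion: "B (br (br u e) v) w = (\<Sum>f\<in>E. B f f * a e f * B (br f v) w)" for v w
    unfolding a_def by (subst onb_linear_expansion[OF onb_UNIV, of "\<lambda>x. br x v"])
      (auto intro!: linearI simp: mult.assoc)
  have Lue: "B (L u e) f = (a e f - a f e + b f e) / 2" for f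
    unfolding a_def b_def LC_inner by (subst br_antisym[of f u]) simp
  have "L e u = L u e - br u e" using LC_torsion_free[of u e] by (simp add: algebra_simps)
  then have "B (curv br B u e u) e = B (L (br u e) u) e + B (L u e) (L u e)
      - B (br u e) (L u e) + B (L e (L u u)) e"
    unfolding curv_def using LC_skew[of u "L e u" e] by simp
  also have "B (L (br u e) u) e =
      (B (br (br u e) u) e + B (br e (br u e)) u + B (br e u) (br u e)) / 2"
    by (simp add: LC_inner)
  also have "B (br (br u e) u) e = - (\<Sum>f\<in>E. B f f * a e f * a f e)"
    unfolding bracket_expansion a_def by (simp add: sum_negf[symmetric] br_antisym[of f u for f])
  also have "B (br e (br u e)) u = (\<Sum>f\<in>E. B f f * a e f * b e f)"
    using bracket_expansion[of e u] br_antisym[of e "br u e"]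
    by (simp add: b_def sum_negf[symmetric] br_antisym[of f e for f])
  also have "B (br e u) (br u e) = - (\<Sum>f\<in>E. B f f * a e f * a e f)"
    unfolding a_def by (subst br_antisym) (simp add: parseval[of "br u e" "br u e"])
  also have "B (L u e) (L u e) = (\<Sum>f\<in>E. B f f * B (L u e) f * B (L u e) f)"
    by (rule parseval)
  also have "\<dots> = (\<Sum>f\<in>E. B f f * ((a e f - a f e + b f e) / 2)\<^sup>2)"
    by (simp add: Lue power2_eq_square mult.assoc)
  also have "B (br u e) (L u e) = (\<Sum>f\<in>E. B f f * B (br u e) f * B (L u e) f)"
    by (rule parseval)
  also have "\<dots> = (\<Sum>f\<in>E. B f f * (a e f * ((a e f - a f e + b f e) / 2)))"
    by (simp add: Lue a_def mult.assoc)
  finally have expansion: "B (curv br B u e u) e =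
      (- (\<Sum>f\<in>E. B f f * a e f * a f e) + (\<Sum>f\<in>E. B f f * a e f * b e f)
        + - (\<Sum>f\<in>E. B f f * a e f * a e f)) / 2
      + (\<Sum>f\<in>E. B f f * ((a e f - a f e + b f e) / 2)\<^sup>2)
      - (\<Sum>f\<in>E. B f f * (a e f * ((a e f - a f e + b f e) / 2))) + B (L e (L u u)) e" .
  have summand: "B f f * ((- a e f * a f e + a e f * b e f - a e f * a e f) / 2
       + ((a e f - a f e + b f e) / 2)\<^sup>2 - a e f * ((a e f - a f e + b f e) / 2)) =
      (B f f * a e f * a f e) * (-1/2) + (B f f * a e f * b e f) * (1/2)
      + (B f f * a e f * a e f) * (-1/2) + B f f * ((a e f - a f e + b f e) / 2)\<^sup>2
      - B f f * (a e f * ((a e f - a f e + b f e) / 2))" for f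
    by (simp add: field_simps)
  show ?thesis
    unfolding summand by (simp only: sum.distrib sum_subtractf sum_distrib_right[symmetric])
      (simp add: expansion)
qed

text \<open>The terms of the curvature expansion split into the symmetric part that makes
  up \<open>ricci_form\<close> and an antisymmetric part whose double sum vanishes; unimodularity
  removes the remaining term \<open>B (L e (L u u)) e\<close>.\<close>
lemma ricci_quadratic_eq_ricci_form:
  assumes "unimodular br"
  shows "B (ricci br B u) u = ricci_form E u"
proof -
  define a where "a e f = B (br u e) f" for e f
  define b where "b e f = B (br e f) u" for e f
  have b_antisym: "b f e = - b e f" for e f unfolding b_def by (subst br_antisym) simp
  define T where "T e f = (- a e f * a f e + a e f * b e f - a e f * a e f) / 2
     + ((a e f - a f e + b f e) / 2)\<^sup>2 - a e f * ((a e f - a f e + b f e) / 2)" for e f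
  define G where "G e f = - (a e f)\<^sup>2 / 2 - a e f * a f e / 2 + (b e f)\<^sup>2 / 4" for e f
  define D where "D e f = ((a f e)\<^sup>2 - (a e f)\<^sup>2) / 4 + (a e f + a f e) * b e f / 2" for e f
  have T_split: "T e f = G e f + D e f" for e f
    unfolding T_def G_def D_def b_antisym[of f e] by (simp add: power2_eq_square field_simps)
  have D_antisym: "D e f = - D f e" for e f
    unfolding D_def b_antisym[of f e] by (simp add: field_simps)
  have trace_L: "(\<Sum>e\<in>E. B e e * B (L e y) e) = 0" for y
  proof -
    have "(\<Sum>e\<in>E. B e e * B (L e y) e) = - (\<Sum>e\<in>E. B e e * B (br y e) e)"
      by (simp add: LC_inner sum_negf[symmetric] br_antisym[of e y for e])
    also have "\<dots> = - trace (br y)" using trace_eq_onb_sum[OF linear_br] by simp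
    finally show ?thesis using assms by (simp add: unimodular_def)
  qed
  have "B (ricci br B u) u = (\<Sum>e\<in>E. B e e * ((\<Sum>f\<in>E. B f f * T e f) + B (L e (L u u)) e))"
    unfolding ricci_quadratic_onb T_def a_def b_def by (simp add: curv_diag_expansion)
  also have "\<dots> = (\<Sum>e\<in>E. \<Sum>f\<in>E. B e e * B f f * T e f)"
    using trace_L[of "L u u"] by (simp add: distrib_left sum.distrib sum_distrib_left mult.assoc)
  also have "\<dots> = (\<Sum>e\<in>E. \<Sum>f\<in>E. B e e * B f f * G e f)"
    using double_sum_antisym_eq_0[OF D_antisym, where w = "\<lambda>e. B e e" and S = E]
    by (simp add: T_split distrib_left sum.distrib)
  also have "\<dots> = ricci_form E u"
  proof -
    have "B (br u e) (br u e) = (\<Sum>f\<in>E. B f f * (a e f)\<^sup>2)" for e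
      using onb_parseval[OF onb_UNIV, of "br u e" "br u e"]
      by (simp add: a_def power2_eq_square mult.assoc)
    moreover have "B (br u (br u e)) e = (\<Sum>f\<in>E. B f f * (a e f * a f e))" for e
      unfolding a_def by (subst onb_linear_expansion[OF onb_UNIV linear_br]) (auto simp: mult.assoc)
    ultimately show ?thesis unfolding ricci_form_def G_def b_def
      by (simp add: sum_distrib_left sum_subtractf[symmetric] sum.distrib[symmetric]
          sum_divide_distrib algebra_simps)
  qed
  finally show ?thesis .
qed

end

context lie_algebra_with_form
begin

lemma ricci_quadratic_eq_ricci_form_onb:
  assumes "onb UNIV E" "unimodular br"
  shows "B (ricci br B u) u = ricci_form E u"
proof -
  interpret lie_algebra_onb br B E by unfold_locales (rule assms(1))
  show ?thesis by (rule ricci_quadratic_eq_ricci_form[OF assms(2)])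
qed

section \<open>Ricci-flat Euclidean algebras\<close>

primrec derived_series_on :: "'g set \<Rightarrow> nat \<Rightarrow> 'g set" where
  "derived_series_on V 0 = V"
| "derived_series_on V (Suc k) =
     span {br x y | x y. x \<in> derived_series_on V k \<and> y \<in> derived_series_on V k}"

lemma derived_series_on_shift:
  "derived_series_on (derived_series_on V (Suc 0)) k = derived_series_on V (Suc k)"
  by (induction k) auto

lemma derived_series_eq_on_UNIV: "derived_series br k = derived_series_on UNIV k"
  by (induction k) auto

lemma br_in_derived_series_on: "x \<in> V \<Longrightarrow> y \<in> V \<Longrightarrow> br x y \<in> derived_series_on V (Suc 0)"
  by (auto intro!: span_base)

lemma derived_series_on_subset:
  assumes "subspace V" "\<And>x y. x \<in> V \<Longrightarrow> y \<in> V \<Longrightarrow> br x y \<in> V"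
  shows "derived_series_on V (Suc 0) \<subseteq> V"
proof -
  have "{br x y | x y. x \<in> V \<and> y \<in> V} \<subseteq> V" using assms(2) by auto
  then show ?thesis using assms(1) by (simp add: span_minimal)
qed

lemma derived_series_on_invariant:
  assumes "\<And>d. d \<in> D \<Longrightarrow> br u d \<in> D" "c \<in> derived_series_on D (Suc 0)"
  shows "br u c \<in> derived_series_on D (Suc 0)"
proof -
  have "c \<in> span {br a b | a b. a \<in> D \<and> b \<in> D}" using assms(2) by simp
  then show ?thesis
  proof (induction rule: span_induct_alt)
    case base
    then show ?case by (simp add: span_zero)
  next
    case (step r x y)
    then obtain a b where ab: "x = br a b" "a \<in> D" "b \<in> D" by auto
    then have "br (br u a) b \<in> derived_series_on D (Suc 0)" "br a (br u b) \<in> derived_series_on D (Suc 0)"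
      using assms(1) by (auto intro!: span_base)
    then have "br u x \<in> derived_series_on D (Suc 0)"
      unfolding ab(1) br_derivation[of u a b] by (simp add: span_add)
    then show ?case using step by (simp add: span_add span_scale)
  qed
qed

lemma derived_series_ideal: "y \<in> derived_series_on UNIV k \<Longrightarrow> br x y \<in> derived_series_on UNIV k"
proof (induction k arbitrary: x y)
  case (Suc k)
  then show ?case using derived_series_on_invariant[of "derived_series_on UNIV k" x y] by simp
qed simp

lemma derived_series_ideal_left: "d \<in> derived_series_on UNIV k \<Longrightarrow> br d y \<in> derived_series_on UNIV k"
  using derived_series_ideal[of d k y] br_antisym[of d y]
  by (cases k) (auto simp: span_neg)

definition euclidean_ricci_form :: "'g set \<Rightarrow> 'g \<Rightarrow> real" where
  "euclidean_ricci_form E u = - (\<Sum>e\<in>E. B (br u e) (br u e)) / 2 - (\<Sum>e\<in>E. B (br u (br u e)) e) / 2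
     + (\<Sum>e\<in>E. \<Sum>f\<in>E. (B (br e f) u)\<^sup>2) / 4"

lemma ricci_form_eq_euclidean:
  assumes "onb V E" "pos_definite_on B V"
  shows "ricci_form E u = euclidean_ricci_form E u"
proof -
  have "(\<Sum>e\<in>E. \<Sum>f\<in>E. B e e * B f f * (B (br e f) u)\<^sup>2) =
      (\<Sum>e\<in>E. B e e * (\<Sum>f\<in>E. B f f * (B (br e f) u)\<^sup>2))"
    by (simp add: sum_distrib_left mult.assoc)
  then show ?thesis
    unfolding ricci_form_def euclidean_ricci_form_def by (simp add: onb_pos_definite_sum[OF assms])
qed

lemma skew_on_onb_imp_skew:
  assumes E: "onb V E" "pos_definite_on B V"
    and skew: "\<And>e f. e \<in> E \<Longrightarrow> f \<in> E \<Longrightarrow> B (br u f) e = - B (br u e) f"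
    and vw: "v \<in> V" "w \<in> V"
  shows "B (br u v) w = - B v (br u w)"
proof -
  have "B (br u v) w = B (br u (\<Sum>e\<in>E. B v e *\<^sub>R e)) w"
    using onb_pos_definite_expansion[OF E vw(1)] by simp
  also have "\<dots> = (\<Sum>e\<in>E. B v e * B (br u e) w)" by simp
  also have "\<dots> = (\<Sum>e\<in>E. \<Sum>f\<in>E. B v e * B (br u e) f * B w f)"
    by (simp add: onb_pos_definite_parseval[OF E vw(2)] sum_distrib_left mult.assoc)
  also have "\<dots> = (\<Sum>e\<in>E. \<Sum>f\<in>E. - (B w f * B (br u f) e * B v e))"
  proof (intro sum.cong refl)
    fix e f assume "e \<in> E" "f \<in> E"
    then show "B v e * B (br u e) f * B w f = - (B w f * B (br u f) e * B v e)"
      using skew[of e f] by simp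
  qed
  also have "\<dots> = - (\<Sum>f\<in>E. B w f * (\<Sum>e\<in>E. B (br u f) e * B v e))"
    by (subst sum.swap) (simp add: sum_distrib_left sum_negf mult.assoc)
  also have "\<dots> = - (\<Sum>f\<in>E. B w f * B (br u f) v)"
    using onb_pos_definite_parseval[OF E vw(1)] by simp
  also have "(\<Sum>f\<in>E. B w f * B (br u f) v) = B (br u (\<Sum>f\<in>E. B w f *\<^sub>R f)) v" by simp
  also have "\<dots> = B (br u w) v" using onb_pos_definite_expansion[OF E vw(2)] by simp
  finally show ?thesis by (simp add: B_sym)
qed

text \<open>For \<open>u \<perp> [V, V]\<close> the Ricci form is \<open>-(\<Sum>\<^sub>e\<^sub>,\<^sub>f (\<alpha> e f + \<alpha> f e)\<^sup>2)/4\<close> with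
  \<open>\<alpha> e f = B (br u e) f\<close>, so it vanishes only if \<open>ad u\<close> is skew.\<close>
lemma ricci_flat_imp_skew:
  assumes V: "pos_definite_on B V" "\<And>x y. x\<in>V \<Longrightarrow> y\<in>V \<Longrightarrow> br x y \<in> V"
    and E: "onb V E" and u: "u \<in> V" "\<And>d. d \<in> derived_series_on V (Suc 0) \<Longrightarrow> B u d = 0"
    and ric: "euclidean_ricci_form E u = 0" and vw: "v \<in> V" "w \<in> V"
  shows "B (br u v) w = - B v (br u w)"
proof (rule skew_on_onb_imp_skew[OF E V(1) _ vw])
  have EV: "e \<in> V" if "e \<in> E" for e using onb_subset[OF E that] .
  have fin: "finite E" using onb_finite[OF E] .
  define \<alpha> where "\<alpha> e f = B (br u e) f" for e f
  have "B (br u e) (br u e) = (\<Sum>f\<in>E. \<alpha> e f * \<alpha> e f)" if "e \<in> E" for e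
    unfolding \<alpha>_def by (rule onb_pos_definite_parseval[OF E V(1) V(2)[OF u(1) EV[OF that]]])
  moreover have "B (br u (br u e)) e = (\<Sum>f\<in>E. \<alpha> e f * \<alpha> f e)" if "e \<in> E" for e
  proof -
    have "br u e = (\<Sum>f\<in>E. B (br u e) f *\<^sub>R f)"
      by (rule onb_pos_definite_expansion[OF E V(1) V(2)[OF u(1) EV[OF that]]])
    then have "B (br u (br u e)) e = B (br u (\<Sum>f\<in>E. B (br u e) f *\<^sub>R f)) e" by simp
    then show ?thesis by (simp add: \<alpha>_def)
  qed
  moreover have "B (br e f) u = 0" if "e \<in> E" "f \<in> E" for e f
    using u(2)[OF br_in_derived_series_on[OF EV[OF that(1)] EV[OF that(2)]]] by (simp add: B_sym)
  ultimately have "(\<Sum>e\<in>E. \<Sum>f\<in>E. \<alpha> e f * \<alpha> e f) + (\<Sum>e\<in>E. \<Sum>f\<in>E. \<alpha> e f * \<alpha> f e) = 0"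
    using ric unfolding euclidean_ricci_form_def by simp
  moreover have "(\<Sum>e\<in>E. \<Sum>f\<in>E. \<alpha> f e * \<alpha> f e) = (\<Sum>e\<in>E. \<Sum>f\<in>E. \<alpha> e f * \<alpha> e f)"
    by (rule sum.swap)
  moreover have "(\<Sum>e\<in>E. \<Sum>f\<in>E. (\<alpha> e f + \<alpha> f e)\<^sup>2) = (\<Sum>e\<in>E. \<Sum>f\<in>E. \<alpha> e f * \<alpha> e f)
      + 2 * (\<Sum>e\<in>E. \<Sum>f\<in>E. \<alpha> e f * \<alpha> f e) + (\<Sum>e\<in>E. \<Sum>f\<in>E. \<alpha> f e * \<alpha> f e)"
    by (simp add: power2_eq_square algebra_simps sum.distrib sum_distrib_left)
  ultimately have "(\<Sum>e\<in>E. \<Sum>f\<in>E. (\<alpha> e f + \<alpha> f e)\<^sup>2) = 0" by simp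
  then have sq0: "\<forall>e\<in>E. \<forall>f\<in>E. (\<alpha> e f + \<alpha> f e)\<^sup>2 = 0"
    using fin by (simp add: sum_nonneg_eq_0_iff sum_nonneg)
  show "B (br u f) e = - B (br u e) f" if "e \<in> E" "f \<in> E" for e f
  proof -
    have "(\<alpha> e f + \<alpha> f e)\<^sup>2 = 0" using sq0 that by blast
    then have "\<alpha> e f + \<alpha> f e = 0" by simp
    then show ?thesis unfolding \<alpha>_def by linarith
  qed
qed

lemma skew_orthogonal_derived_imp_commute:
  assumes nondeg: "\<And>x. x \<in> V \<Longrightarrow> (\<And>w. w \<in> V \<Longrightarrow> B x w = 0) \<Longrightarrow> x = 0"
    and closed: "\<And>x y. x\<in>V \<Longrightarrow> y\<in>V \<Longrightarrow> br x y \<in> V"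
    and skew: "\<And>v w. v\<in>V \<Longrightarrow> w\<in>V \<Longrightarrow> B (br u v) w = - B v (br u w)"
    and u: "u \<in> V" and u': "u' \<in> V" "\<And>d. d \<in> derived_series_on V (Suc 0) \<Longrightarrow> B u' d = 0"
  shows "br u u' = 0"
proof (rule nondeg[OF closed[OF u u'(1)]])
  fix w assume w: "w \<in> V"
  show "B (br u u') w = 0" using skew[OF u'(1) w] u'(2)[OF br_in_derived_series_on[OF u w]] by simp
qed

lemma euclidean_ricci_form_restrict:
  assumes V: "pos_definite_on B V" "\<And>x y. x\<in>V \<Longrightarrow> y\<in>V \<Longrightarrow> br x y \<in> D" "D \<subseteq> V"
    and ED: "onb D ED" and EP: "onb P EP" and P: "P \<subseteq> V" "\<And>p d. p\<in>P \<Longrightarrow> d\<in>D \<Longrightarrow> B p d = 0"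
    and skew: "\<And>u v w. u\<in>P \<Longrightarrow> v\<in>V \<Longrightarrow> w\<in>V \<Longrightarrow> B (br u v) w = - B v (br u w)"
    and abelian: "\<And>p q. p\<in>P \<Longrightarrow> q\<in>P \<Longrightarrow> br p q = 0"
    and x: "x \<in> D"
  shows "euclidean_ricci_form (ED \<union> EP) x = euclidean_ricci_form ED x"
proof -
  have pD: "pos_definite_on B D" using V(1,3) by (rule pos_definite_on_subset)
  have disj: "ED \<inter> EP = {}" using onb_disjoint[OF ED EP] P(2) B_sym by metis
  have fD: "finite ED" and fP: "finite EP" using onb_finite ED EP by auto
  have EDV: "e \<in> V" if "e \<in> ED" for e using onb_subset[OF ED that] V(3) by auto
  have EPP: "e \<in> P" if "e \<in> EP" for e using onb_subset[OF EP that] .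
  have EPV: "e \<in> V" if "e \<in> EP" for e using EPP[OF that] P(1) by auto
  have xV: "x \<in> V" using x V(3) by auto
  have union: "(\<Sum>e\<in>ED \<union> EP. g e) = (\<Sum>e\<in>ED. g e) + (\<Sum>e\<in>EP. g e)" for g :: "'g \<Rightarrow> real"
    using sum.union_disjoint[OF fD fP disj] .
  have second_P: "(\<Sum>e\<in>EP. B (br x (br x e)) e) = 0"
  proof (intro sum.neutral ballI)
    fix e assume e: "e \<in> EP"
    have "br x e \<in> V" using V(2)[OF xV EPV[OF e]] V(3) by auto
    then have "br x (br x e) \<in> D" using V(2)[OF xV] by auto
    then show "B (br x (br x e)) e = 0" using P(2)[OF EPP[OF e]] by (metis B_sym)
  qed
  have swap: "(B (br e f) x)\<^sup>2 = (B (br x f) e)\<^sup>2" if "e \<in> V" "f \<in> P" for e f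
  proof -
    have "B (br e f) x = - B (br f e) x" by (subst br_antisym) simp
    also have "B (br f e) x = - B e (br f x)" using skew[OF that(2) that(1) xV] .
    also have "br f x = - br x f" by (rule br_antisym)
    finally show ?thesis by (simp add: B_sym power2_eq_square)
  qed
  have parseval_D: "(\<Sum>e\<in>ED. (B (br x f) e)\<^sup>2) = B (br x f) (br x f)" if "f \<in> V" for f
    using onb_pos_definite_parseval[OF ED pD V(2)[OF xV that], of "br x f"]
    by (simp add: power2_eq_square)
  have DP: "(\<Sum>e\<in>ED. \<Sum>f\<in>EP. (B (br e f) x)\<^sup>2) = (\<Sum>f\<in>EP. B (br x f) (br x f))"
  proof -
    have "(\<Sum>e\<in>ED. \<Sum>f\<in>EP. (B (br e f) x)\<^sup>2) = (\<Sum>f\<in>EP. \<Sum>e\<in>ED. (B (br x f) e)\<^sup>2)"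
      using swap EDV EPP by (subst sum.swap) (intro sum.cong refl; auto)
    also have "\<dots> = (\<Sum>f\<in>EP. B (br x f) (br x f))" using parseval_D EPV by (intro sum.cong refl) auto
    finally show ?thesis .
  qed
  have PD: "(\<Sum>e\<in>EP. \<Sum>f\<in>ED. (B (br e f) x)\<^sup>2) = (\<Sum>f\<in>EP. B (br x f) (br x f))"
  proof -
    have "(B (br e f) x)\<^sup>2 = (B (br x e) f)\<^sup>2" if "e \<in> P" "f \<in> V" for e f
      using swap[OF that(2,1)] br_antisym[of e f] by (simp add: power2_eq_square)
    then have "(\<Sum>e\<in>EP. \<Sum>f\<in>ED. (B (br e f) x)\<^sup>2) = (\<Sum>e\<in>EP. \<Sum>f\<in>ED. (B (br x e) f)\<^sup>2)"
      using EDV EPP by (intro sum.cong refl) auto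
    also have "\<dots> = (\<Sum>f\<in>EP. B (br x f) (br x f))" using parseval_D EPV by (intro sum.cong refl) auto
    finally show ?thesis .
  qed
  have PP: "(\<Sum>e\<in>EP. \<Sum>f\<in>EP. (B (br e f) x)\<^sup>2) = 0"
    using abelian EPP by (intro sum.neutral ballI) auto
  show ?thesis
    unfolding euclidean_ricci_form_def union sum.distrib DP PD PP using second_P
    by (simp add: field_simps)
qed

lemma onb_trace_restrict:
  assumes V: "pos_definite_on B V" "\<And>x y. x\<in>V \<Longrightarrow> y\<in>V \<Longrightarrow> br x y \<in> D"
    and ED: "onb D ED" and EP: "onb P EP" and P: "\<And>p d. p\<in>P \<Longrightarrow> d\<in>D \<Longrightarrow> B p d = 0"
    and E: "onb V (ED \<union> EP)" "onb V E" and trace_0: "(\<Sum>e\<in>E. B (br x e) e) = 0"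
    and x: "x \<in> V"
  shows "(\<Sum>e\<in>ED. B (br x e) e) = 0"
proof -
  have disj: "ED \<inter> EP = {}" using onb_disjoint[OF ED EP] P B_sym by metis
  have fin: "finite ED" "finite EP" using onb_finite ED EP by auto
  have "(\<Sum>e\<in>E. B e e * B (br x e) e) = (\<Sum>e\<in>ED \<union> EP. B e e * B (br x e) e)"
    by (rule onb_trace_indep[OF E(2,1), of "\<lambda>e e'. B (br x e) e'"])
       (auto simp: bilinear_def intro!: linearI)
  then have "(\<Sum>e\<in>ED \<union> EP. B (br x e) e) = 0"
    using trace_0 by (simp add: onb_pos_definite_sum[OF E(2) V(1)] onb_pos_definite_sum[OF E(1) V(1)])
  moreover have "(\<Sum>e\<in>EP. B (br x e) e) = 0"
  proof (intro sum.neutral ballI)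
    fix e assume "e \<in> EP"
    then have "e \<in> P" "e \<in> V" using onb_subset[OF EP] onb_subset[OF E(1)] by auto
    then show "B (br x e) e = 0" using P V(2)[OF x] by (auto simp: B_sym)
  qed
  moreover have "(\<Sum>e\<in>ED \<union> EP. B (br x e) e) = (\<Sum>e\<in>ED. B (br x e) e) + (\<Sum>e\<in>EP. B (br x e) e)"
    by (rule sum.union_disjoint[OF fin disj])
  ultimately show ?thesis by simp
qed

lemma onb_trace_commute:
  assumes EC: "onb C EC" and X: "linear X" "\<And>c. c\<in>C \<Longrightarrow> X c \<in> C"
    and Y: "linear Y" "\<And>c. c\<in>C \<Longrightarrow> Y c \<in> C"
  shows "(\<Sum>c\<in>EC. B c c * B (X (Y c)) c) = (\<Sum>c\<in>EC. B c c * B (Y (X c)) c)"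
proof -
  have "(\<Sum>c\<in>EC. B c c * B (X (Y c)) c) =
      (\<Sum>c\<in>EC. \<Sum>d\<in>EC. B c c * B d d * (B (Y c) d * B (X d) c))"
    using onb_linear_expansion[OF EC X(1) Y(2)[OF onb_subset[OF EC]]]
    by (intro sum.cong refl) (simp add: sum_distrib_left mult.assoc mult.left_commute)
  also have "\<dots> = (\<Sum>d\<in>EC. \<Sum>c\<in>EC. B c c * B d d * (B (Y c) d * B (X d) c))"
    by (rule sum.swap)
  also have "\<dots> = (\<Sum>c\<in>EC. B c c * B (Y (X c)) c)"
    using onb_linear_expansion[OF EC Y(1) X(2)[OF onb_subset[OF EC]]]
    by (intro sum.cong refl) (simp add: sum_distrib_left mult.assoc mult.left_commute mult.commute)
  finally show ?thesis .
qed

text \<open>A Kleinecke-type argument: \<open>ad w\<close> for \<open>w = [u, v]\<close> commuting with \<open>v\<close> is a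
  commutator of operators one of which commutes with it, so \<open>tr (ad w)\<^sup>2 = 0\<close>; being skew
  on a Euclidean space, \<open>ad w\<close> must vanish there.\<close>
lemma skew_commutator_vanishes:
  assumes C: "subspace C" "pos_definite_on B C" and EC: "onb C EC"
    and uC: "\<And>c. c\<in>C \<Longrightarrow> br u c \<in> C" and vC: "\<And>c. c\<in>C \<Longrightarrow> br v c \<in> C"
    and wC: "\<And>c. c\<in>C \<Longrightarrow> br (br u v) c \<in> C"
    and skew: "\<And>c c'. c\<in>C \<Longrightarrow> c'\<in>C \<Longrightarrow> B (br (br u v) c) c' = - B c (br (br u v) c')"
    and commute: "br v (br u v) = 0" and c: "c \<in> C"
  shows "br (br u v) c = 0"
proof -
  define w where "w = br u v"
  have ECC: "c \<in> C" if "c \<in> EC" for c using onb_subset[OF EC that] .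
  have ad_w: "br w c = br u (br v c) - br v (br u c)" for c
    using jacobi[of c u v] unfolding w_def
    by (simp add: br_antisym[of c "br u v"] br_antisym[of c u] algebra_simps)
  have ad_w_v: "br w (br v c) = br v (br w c)" for c
    using jacobi[of w v c] commute unfolding w_def
    by (simp add: br_antisym[of c "br u v"] br_antisym[of "br u v" v] algebra_simps)
  have "(\<Sum>c\<in>EC. B c c * B (br w (br w c)) c) =
      (\<Sum>c\<in>EC. B c c * B (br w (br u (br v c))) c) - (\<Sum>c\<in>EC. B c c * B (br w (br v (br u c))) c)"
    by (simp add: ad_w sum_subtractf[symmetric] algebra_simps)
  also have "(\<Sum>c\<in>EC. B c c * B (br w (br v (br u c))) c) = (\<Sum>c\<in>EC. B c c * B (br v (br w (br u c))) c)"
    by (simp add: ad_w_v)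
  also have "(\<Sum>c\<in>EC. B c c * B (br v (br w (br u c))) c) = (\<Sum>c\<in>EC. B c c * B (br w (br u (br v c))) c)"
    using onb_trace_commute[OF EC, of "br v" "\<lambda>c. br w (br u c)"] linear_br vC uC wC
    unfolding w_def by (simp add: linear_compose[of "br u" "br (br u v)", unfolded o_def])
  finally have trace_sq: "(\<Sum>c\<in>EC. B c c * B (br w (br w c)) c) = 0" by simp
  have "(\<Sum>c\<in>EC. B (br w c) (br w c)) = - (\<Sum>c\<in>EC. B (br w (br w c)) c)"
    using skew[OF ECC wC[OF ECC]] unfolding w_def by (simp add: sum_negf[symmetric] B_sym)
  then have "(\<Sum>c\<in>EC. B (br w c) (br w c)) = 0"
    using trace_sq onb_pos_definite_sum[OF EC C(2)] by simp
  then have "\<forall>c\<in>EC. B (br w c) (br w c) = 0"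
    using onb_finite[OF EC] pos_definite_on_nonneg[OF C(2)] wC ECC unfolding w_def
    by (subst (asm) sum_nonneg_eq_0_iff) auto
  then have "br w e = 0" if "e \<in> EC" for e
    using that C(2) wC ECC unfolding w_def pos_definite_on_def by force
  then have "br w (\<Sum>e\<in>EC. (B e e * B c e) *\<^sub>R e) = 0" by simp
  then show ?thesis using onb_expansion[OF EC c] unfolding w_def by simp
qed

lemma bracket_span_decomposition:
  assumes decV: "\<And>x. x \<in> V \<Longrightarrow> \<exists>p d. x = p + d \<and> p \<in> P \<and> d \<in> D"
    and decD: "\<And>d. d \<in> D \<Longrightarrow> \<exists>q c. d = q + c \<and> q \<in> Q \<and> c \<in> C"
    and abelian_P: "\<And>p p'. p \<in> P \<Longrightarrow> p' \<in> P \<Longrightarrow> br p p' = 0"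
    and PC: "\<And>p c. p \<in> P \<Longrightarrow> c \<in> C \<Longrightarrow> br p c \<in> C"
    and DD: "\<And>d d'. d \<in> D \<Longrightarrow> d' \<in> D \<Longrightarrow> br d d' \<in> C"
    and C: "subspace C"
    and x: "x \<in> span {br a b | a b. a \<in> V \<and> b \<in> V}"
  shows "\<exists>g c. g \<in> span {br p q | p q. p \<in> P \<and> q \<in> Q} \<and> c \<in> C \<and> x = g + c"
  using x
proof (induction rule: span_induct_alt)
  case base
  then show ?case using C subspace_0 by (intro exI[of _ 0]) auto
next
  case (step r x y)
  define G where "G = {br p q | p q. p \<in> P \<and> q \<in> Q}"
  obtain g c where gc: "g \<in> span G" "c \<in> C" "y = g + c" using step.IH unfolding G_def by auto
  obtain a b where ab: "x = br a b" "a \<in> V" "b \<in> V" using step.hyps by auto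
  obtain p d1 where a: "a = p + d1" "p \<in> P" "d1 \<in> D" using decV[OF ab(2)] by auto
  obtain p' d2 where b: "b = p' + d2" "p' \<in> P" "d2 \<in> D" using decV[OF ab(3)] by auto
  obtain q1 c1 where d1: "d1 = q1 + c1" "q1 \<in> Q" "c1 \<in> C" using decD[OF a(3)] by auto
  obtain q2 c2 where d2: "d2 = q2 + c2" "q2 \<in> Q" "c2 \<in> C" using decD[OF b(3)] by auto
  have "x = (br p q2 - br p' q1) + (br p c2 - br p' c1 + br d1 d2)"
    using abelian_P[OF a(2) b(2)] unfolding ab(1) a(1) b(1) d1(1) d2(1)
    by (simp add: br_antisym[of q1 p'] br_antisym[of c1 p'] algebra_simps)
  moreover have "br p q2 - br p' q1 \<in> span G"
    using a b d1 d2 unfolding G_def by (blast intro: span_diff span_base)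
  moreover have "br p c2 - br p' c1 + br d1 d2 \<in> C"
    using PC[OF a(2) d2(3)] PC[OF b(2) d1(3)] DD[OF a(3) b(3)] C
    by (simp add: subspace_add subspace_diff)
  ultimately obtain g' c' where gc': "g' \<in> span G" "c' \<in> C" "x = g' + c'" by blast
  show ?case
    using gc gc' C unfolding G_def[symmetric]
    by (intro exI[of _ "r *\<^sub>R g' + g"] exI[of _ "r *\<^sub>R c' + c"])
       (auto simp: algebra_simps intro: span_add span_scale subspace_add subspace_scale)
qed

text \<open>With \<open>P = V \<inter> D\<^sup>\<bottom>\<close> and \<open>Q = D \<inter> C\<^sup>\<bottom>\<close>, each bracket \<open>[p, q]\<close> lies in \<open>Q\<close> and
  kills \<open>C\<close> by the Kleinecke argument; these brackets span \<open>D\<close> modulo \<open>C\<close>, so \<open>Q\<close>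
  commutes with \<open>C\<close>.\<close>
lemma derived_algebra_abelian_step:
  fixes V
  defines "D \<equiv> derived_series_on V (Suc 0)"
    and "C \<equiv> derived_series_on (derived_series_on V (Suc 0)) (Suc 0)"
  assumes V: "subspace V" "pos_definite_on B V" "\<And>x y. x\<in>V \<Longrightarrow> y\<in>V \<Longrightarrow> br x y \<in> V"
    and skew_V: "\<And>u v w. u \<in> V \<Longrightarrow> \<forall>d\<in>D. B u d = 0 \<Longrightarrow> v \<in> V \<Longrightarrow> w \<in> V \<Longrightarrow>
      B (br u v) w = - B v (br u w)"
    and abelian_C: "abelian_on br C"
    and skew_D: "\<And>u v w. u \<in> D \<Longrightarrow> \<forall>c\<in>C. B u c = 0 \<Longrightarrow> v \<in> D \<Longrightarrow> w \<in> D \<Longrightarrow>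
      B (br u v) w = - B v (br u w)"
  shows "abelian_on br D"
proof -
  have C_eq: "C = derived_series_on D (Suc 0)" unfolding C_def D_def ..
  have DV: "D \<subseteq> V" unfolding D_def by (rule derived_series_on_subset[OF V(1,3)])
  have sD: "subspace D" unfolding D_def by simp
  have pD: "pos_definite_on B D" using V(2) DV by (rule pos_definite_on_subset)
  have brD: "br x y \<in> D" if "x \<in> V" "y \<in> V" for x y
    using br_in_derived_series_on[OF that] unfolding D_def .
  have DD: "br x y \<in> D" if "x \<in> D" "y \<in> D" for x y using brD DV that by auto
  have CD: "C \<subseteq> D" unfolding C_eq by (rule derived_series_on_subset[OF sD DD])
  have sC: "subspace C" unfolding C_eq by simp
  have pC: "pos_definite_on B C" using pD CD by (rule pos_definite_on_subset)
  have brC: "br x y \<in> C" if "x \<in> D" "y \<in> D" for x y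
    using br_in_derived_series_on[OF that] unfolding C_eq .
  have VC: "br u c \<in> C" if "u \<in> V" "c \<in> C" for u c
    using derived_series_on_invariant[of D u c] brD DV that unfolding C_eq by auto
  obtain ED where ED: "onb D ED" using onb_exists_pos_definite[OF sD pD] by auto
  obtain EC where EC: "onb C EC" using onb_exists_pos_definite[OF sC pC] by auto
  define P where "P = {w \<in> V. \<forall>d\<in>D. B w d = 0}"
  define Q where "Q = {v \<in> D. \<forall>c\<in>C. B v c = 0}"
  have skew_P: "B (br p v) w = - B v (br p w)" if "p \<in> P" "v \<in> V" "w \<in> V" for p v w
    using skew_V that unfolding P_def by auto
  have abelian_P: "br p p' = 0" if "p \<in> P" "p' \<in> P" for p p'
    using skew_orthogonal_derived_imp_commute[OF pos_definite_on_eq_0[OF V(2)] V(3) skew_P[OF that(1)]]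
      that unfolding P_def D_def by blast
  have abelian_Q: "br q q' = 0" if "q \<in> Q" "q' \<in> Q" for q q'
    using skew_orthogonal_derived_imp_commute[OF pos_definite_on_eq_0[OF pD] DD] skew_D
      that unfolding Q_def C_eq by blast
  have PQ_kills_C: "br (br p q) c = 0" if p: "p \<in> P" and q: "q \<in> Q" and c: "c \<in> C" for p q c
  proof -
    have pV: "p \<in> V" and qD: "q \<in> D" using p q unfolding P_def Q_def by auto
    have pqD: "br p q \<in> D" using brD pV qD DV by auto
    have "B (br p q) c' = 0" if c': "c' \<in> C" for c'
    proof -
      have "B (br p q) c' = - B q (br p c')" using skew_P[OF p] qD c' CD DV by auto
      also have "B q (br p c') = 0" using q VC[OF pV c'] unfolding Q_def by auto
      finally show ?thesis by simp
    qed
    then have pqQ: "br p q \<in> Q" using pqD unfolding Q_def by auto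
    show ?thesis
    proof (rule skew_commutator_vanishes[OF sC pC EC _ _ _ _ _ c])
      show "br p c \<in> C" if "c \<in> C" for c using VC[OF pV that] .
      show "br q c \<in> C" if "c \<in> C" for c using brC[OF qD] that CD by auto
      show "br (br p q) c \<in> C" if "c \<in> C" for c using brC[OF pqD] that CD by auto
      show "B (br (br p q) c) c' = - B c (br (br p q) c')" if "c \<in> C" "c' \<in> C" for c c'
        using skew_D[of "br p q" c c'] pqQ that CD unfolding Q_def by auto
      show "br q (br p q) = 0" using abelian_Q[OF q pqQ] .
    qed
  qed
  have Q_kills_C: "br q c = 0" if q: "q \<in> Q" and c: "c \<in> C" for q c
  proof -
    have decV: "\<exists>p d. x = p + d \<and> p \<in> P \<and> d \<in> D" if "x \<in> V" for x
      using orthogonal_decomposition[OF ED sD V(1) DV that] unfolding P_def by (auto simp: B_sym)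
    have decD: "\<exists>q c. d = q + c \<and> q \<in> Q \<and> c \<in> C" if "d \<in> D" for d
      using orthogonal_decomposition[OF EC sC sD CD that] unfolding Q_def by (auto simp: B_sym)
    have "q \<in> span {br a b | a b. a \<in> V \<and> b \<in> V}" using q unfolding Q_def D_def by simp
    then obtain g c0 where g: "g \<in> span {br p q | p q. p \<in> P \<and> q \<in> Q}" "c0 \<in> C" "q = g + c0"
      using bracket_span_decomposition[OF decV decD abelian_P _ brC sC] VC P_def by blast
    from g(1) have "br g c = 0"
      by (induction rule: span_induct_alt) (use PQ_kills_C c in auto)
    then show ?thesis using abelian_C g(2,3) c unfolding abelian_on_def by simp
  qed
  show ?thesis unfolding abelian_on_def
  proof (intro ballI)
    fix a b assume "a \<in> D" "b \<in> D"
    obtain qa ca where a: "a = qa + ca" "qa \<in> Q" "ca \<in> C"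
      using orthogonal_decomposition[OF EC sC sD CD \<open>a \<in> D\<close>] unfolding Q_def by (auto simp: B_sym)
    obtain qb cb where b: "b = qb + cb" "qb \<in> Q" "cb \<in> C"
      using orthogonal_decomposition[OF EC sC sD CD \<open>b \<in> D\<close>] unfolding Q_def by (auto simp: B_sym)
    show "br a b = 0" unfolding a(1) b(1)
      using abelian_Q[OF a(2) b(2)] Q_kills_C[OF a(2) b(3)] Q_kills_C[OF b(2) a(3)]
        abelian_C a(3) b(3) unfolding abelian_on_def by (simp add: br_antisym[of ca qb])
  qed
qed

lemma derived_algebra_inherits_ricci_flat:
  fixes V E
  defines "D \<equiv> derived_series_on V (Suc 0)"
  assumes sV: "subspace V" and pV: "pos_definite_on B V"
    and cV: "\<And>x y. x\<in>V \<Longrightarrow> y\<in>V \<Longrightarrow> br x y \<in> V"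
    and EV: "onb V E" and trace_V: "\<And>x. x\<in>V \<Longrightarrow> (\<Sum>e\<in>E. B (br x e) e) = 0"
    and ricci_V: "\<And>x. x\<in>V \<Longrightarrow> euclidean_ricci_form E x = 0"
  obtains ED where "onb D ED" "\<And>x. x \<in> D \<Longrightarrow> (\<Sum>e\<in>ED. B (br x e) e) = 0"
    "\<And>x. x \<in> D \<Longrightarrow> euclidean_ricci_form ED x = 0"
proof -
  have DV: "D \<subseteq> V" unfolding D_def by (rule derived_series_on_subset[OF sV cV])
  have brD: "br x y \<in> D" if "x \<in> V" "y \<in> V" for x y
    using br_in_derived_series_on[OF that] unfolding D_def .
  have sD: "subspace D" unfolding D_def by simp
  have pD: "pos_definite_on B D" using pV DV by (rule pos_definite_on_subset)
  obtain ED where ED: "onb D ED" using onb_exists_pos_definite[OF sD pD] by auto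
  define P where "P = {w \<in> V. \<forall>u\<in>D. B w u = 0}"
  obtain EP where EP: "onb P EP" "onb V (ED \<union> EP)"
    using onb_extend_pos_definite[OF sV pV ED DV sD] unfolding P_def by auto
  have PV: "P \<subseteq> V" and P_perp: "\<And>p d. p\<in>P \<Longrightarrow> d\<in>D \<Longrightarrow> B p d = 0" unfolding P_def by auto
  have skew_P: "B (br u v) w = - B v (br u w)" if "u \<in> P" "v \<in> V" "w \<in> V" for u v w
    using ricci_flat_imp_skew[OF pV cV EV _ _ ricci_V] that unfolding P_def D_def by auto
  have abelian_P: "br p q = 0" if "p \<in> P" "q \<in> P" for p q
    using skew_orthogonal_derived_imp_commute[OF pos_definite_on_eq_0[OF pV] cV skew_P[OF that(1)]]
      that PV P_perp unfolding D_def by blast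
  have "(\<Sum>e\<in>ED. B (br x e) e) = 0" if "x \<in> D" for x
    using onb_trace_restrict[OF pV brD ED EP(1) P_perp EP(2) EV trace_V] DV that by auto
  moreover have "euclidean_ricci_form ED x = 0" if x: "x \<in> D" for x
  proof -
    have "euclidean_ricci_form ED x = euclidean_ricci_form (ED \<union> EP) x"
      using euclidean_ricci_form_restrict[OF pV brD DV ED EP(1) PV P_perp skew_P abelian_P x] by simp
    also have "\<dots> = euclidean_ricci_form E x"
      using ricci_form_eq_euclidean[OF EP(2) pV] ricci_form_eq_euclidean[OF EV pV]
        ricci_form_basis_indep[OF EP(2) EV] by simp
    finally show ?thesis using ricci_V x DV by auto
  qed
  ultimately show ?thesis using that ED by blast
qed

text \<open>The structural half of the Alekseevskii--Kimel'fel'd theorem; the induction on the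
  dimension passes from \<open>V\<close> to its derived algebra.\<close>
theorem alekseevskii_kimelfeld:
  assumes "subspace V" "pos_definite_on B V" "\<And>x y. x\<in>V \<Longrightarrow> y\<in>V \<Longrightarrow> br x y \<in> V"
    and "onb V E" "\<And>x. x\<in>V \<Longrightarrow> (\<Sum>e\<in>E. B (br x e) e) = 0"
    and "derived_series_on V k = {0}" "\<And>x. x\<in>V \<Longrightarrow> euclidean_ricci_form E x = 0"
  shows "abelian_on br (derived_series_on V (Suc 0)) \<and>
    (\<forall>u\<in>V. (\<forall>d\<in>derived_series_on V (Suc 0). B u d = 0) \<longrightarrow>
      (\<forall>v\<in>V. \<forall>w\<in>V. B (br u v) w = - B v (br u w)))"
  using assms
proof (induction "dim V" arbitrary: V E k rule: less_induct)
  case less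
  note sV = less.prems(1) and pV = less.prems(2) and cV = less.prems(3) and EV = less.prems(4)
    and trace_V = less.prems(5) and solvable_V = less.prems(6) and ricci_V = less.prems(7)
  define D where "D = derived_series_on V (Suc 0)"
  have skew_V: "B (br u v) w = - B v (br u w)" if "u\<in>V" "\<forall>d\<in>D. B u d = 0" "v\<in>V" "w\<in>V" for u v w
    using ricci_flat_imp_skew[OF pV cV EV that(1) _ ricci_V[OF that(1)] that(3,4)] that(2)
    unfolding D_def by blast
  have DV: "D \<subseteq> V" unfolding D_def by (rule derived_series_on_subset[OF sV cV])
  have "abelian_on br D"
  proof (cases "V = {0}")
    case True
    then show ?thesis using DV by (auto simp: abelian_on_def)
  next
    case False
    have "D \<noteq> V"
    proof
      assume "D = V"
      then have "derived_series_on V j = V" for j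
        by (induction j) (simp_all add: D_def derived_series_on_shift[symmetric])
      then show False using solvable_V False by simp
    qed
    then have "D \<subset> V" using DV by auto
    moreover have sD: "subspace D" unfolding D_def by simp
    ultimately have dim_D: "dim D < dim V"
      using dim_psubset[of D V] span_eq_iff[THEN iffD2, OF sD] span_eq_iff[THEN iffD2, OF sV] by simp
    have pD: "pos_definite_on B D" using pV DV by (rule pos_definite_on_subset)
    have cD: "br x y \<in> D" if "x\<in>D" "y\<in>D" for x y
      using br_in_derived_series_on DV that unfolding D_def by blast
    obtain ED where ED: "onb D ED" "\<And>x. x \<in> D \<Longrightarrow> (\<Sum>e\<in>ED. B (br x e) e) = 0"
      "\<And>x. x \<in> D \<Longrightarrow> euclidean_ricci_form ED x = 0"
      using derived_algebra_inherits_ricci_flat[OF sV pV cV EV trace_V ricci_V] unfolding D_def by blast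
    obtain k' where "k = Suc k'" using solvable_V False by (cases k) auto
    then have solvable_D: "derived_series_on D k' = {0}"
      using solvable_V unfolding D_def derived_series_on_shift by simp
    have IH: "abelian_on br (derived_series_on D (Suc 0)) \<and>
      (\<forall>u\<in>D. (\<forall>c\<in>derived_series_on D (Suc 0). B u c = 0) \<longrightarrow>
        (\<forall>v\<in>D. \<forall>w\<in>D. B (br u v) w = - B v (br u w)))"
      by (rule less.hyps[OF dim_D sD pD cD ED(1) ED(2) solvable_D ED(3)])
    show ?thesis
      unfolding D_def
      by (rule derived_algebra_abelian_step[OF sV pV cV]) (use skew_V IH in \<open>simp_all add: D_def\<close>)
  qed
  then show ?case using skew_V unfolding D_def by blast
qed

section \<open>Timelike central vectors\<close>

lemma null_vector_perturb_negative:
  assumes "B v v = 0" "B v w \<noteq> 0"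
  shows "\<exists>t. B (v + t *\<^sub>R w) (v + t *\<^sub>R w) < 0"
proof -
  define b where "b = B v w"
  define c where "c = B w w"
  define d where "d = \<bar>c\<bar> + 1"
  define t where "t = - b / d"
  have d: "d > 0" unfolding d_def by simp
  have "b * b > 0"
    using assms(2) unfolding b_def by (simp add: zero_less_mult_iff linorder_neq_iff disj_commute)
  have "B (v + t *\<^sub>R w) (v + t *\<^sub>R w) * (d * d) = (2 * t * b + t * t * c) * (d * d)"
    using assms(1) unfolding b_def c_def by (simp add: B_sym[of w v] algebra_simps)
  also have "\<dots> = b * b * (c - 2 * d)"
    unfolding t_def using d by (simp add: field_simps)
  also have "\<dots> < 0"
    using \<open>b * b > 0\<close> unfolding d_def by (simp add: mult_pos_neg)
  finally show ?thesis using d by (auto simp: mult_less_0_iff)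
qed

lemma lorentzian_orthogonal_timelike_nonneg:
  assumes lor: "lorentzian B" and z0: "B z0 z0 = -1" "B u z0 = 0"
  shows "B u u \<ge> 0"
proof (rule ccontr)
  assume "\<not> B u u \<ge> 0"
  then have u: "B u u < 0" by simp
  define V where "V = span {z0, u}"
  have "neg_definite_on B V"
    unfolding neg_definite_on_def
  proof (intro ballI impI)
    fix x assume "x \<in> V" "x \<noteq> 0"
    then obtain a b where "x - a *\<^sub>R z0 = b *\<^sub>R u"
      unfolding V_def span_insert[of z0] span_singleton by auto
    then have x: "x = a *\<^sub>R z0 + b *\<^sub>R u" by (simp add: algebra_simps)
    have "B x x = - (a * a) + b * b * B u u"
      unfolding x using z0 by (simp add: B_sym[of z0 u] algebra_simps)
    moreover have "a \<noteq> 0 \<or> b \<noteq> 0" using \<open>x \<noteq> 0\<close> x by auto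
    ultimately show "B x x < 0"
      using u by (smt (verit) mult_pos_neg zero_less_mult_iff zero_le_square)
  qed
  then have "dim V \<le> 1" using lor unfolding lorentzian_def V_def by auto
  moreover have "independent {z0, u}"
  proof -
    have "z0 \<notin> span {u}"
    proof
      assume "z0 \<in> span {u}"
      then obtain k where "z0 = k *\<^sub>R u" by (auto simp: span_singleton)
      then show False using z0 u by auto
    qed
    then show ?thesis using u by (auto simp: independent_insert)
  qed
  then have "card {z0, u} \<le> dim V"
    unfolding V_def by (intro independent_card_le_dim) (auto intro: span_base)
  moreover have "z0 \<noteq> u" using z0 by auto
  ultimately show False by simp
qed

lemma lorentzian_orthogonal_timelike_pos_definite:
  assumes lor: "lorentzian B" and z0: "B z0 z0 = -1"
  shows "pos_definite_on B {w. B w z0 = 0}"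
  unfolding pos_definite_on_def
proof (intro ballI impI)
  fix w assume w: "w \<in> {w. B w z0 = 0}" "w \<noteq> 0"
  have "B w w \<ge> 0" using lorentzian_orthogonal_timelike_nonneg[OF lor z0] w by auto
  moreover have "B w w \<noteq> 0"
  proof
    assume null: "B w w = 0"
    have "nondegenerate_on B UNIV" using lor by (simp add: lorentzian_def)
    then obtain y where y: "B w y \<noteq> 0" using w(2) unfolding nondegenerate_on_def by auto
    define y' where "y' = y + B y z0 *\<^sub>R z0"
    have "B w y' = B w y" using w(1) by (simp add: y'_def B_sym[of w z0])
    then have "B w y' \<noteq> 0" using y by simp
    then obtain t where "B (w + t *\<^sub>R y') (w + t *\<^sub>R y') < 0"
      using null_vector_perturb_negative[OF null] by blast
    moreover have "B (w + t *\<^sub>R y') z0 = 0" using w(1) z0 by (simp add: y'_def)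
    ultimately show False
      using lorentzian_orthogonal_timelike_nonneg[OF lor z0, of "w + t *\<^sub>R y'"] by linarith
  qed
  ultimately show "B w w > 0" by simp
qed

lemma exists_timelike_unit:
  assumes "subspace V" "nondegenerate_on B V" "\<not> pos_definite_on B V"
  shows "\<exists>z\<in>V. B z z = -1"
proof -
  obtain v where v: "v \<in> V" "v \<noteq> 0" "B v v \<le> 0"
    using assms(3) unfolding pos_definite_on_def by force
  have "\<exists>x\<in>V. B x x < 0"
  proof (cases "B v v < 0")
    case False
    then have null: "B v v = 0" using v by linarith
    obtain w where w: "w \<in> V" "B v w \<noteq> 0" using assms(2) v unfolding nondegenerate_on_def by auto
    obtain t where "B (v + t *\<^sub>R w) (v + t *\<^sub>R w) < 0"
      using null_vector_perturb_negative[OF null w(2)] by auto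
    moreover have "v + t *\<^sub>R w \<in> V" using assms(1) v w by (simp add: subspace_add subspace_scale)
    ultimately show ?thesis by blast
  qed (use v in auto)
  then obtain x where x: "x \<in> V" "B x x < 0" by auto
  define z where "z = (1 / sqrt (- B x x)) *\<^sub>R x"
  have "B z z = -1" using x(2) unfolding z_def by (simp add: field_simps)
  moreover have "z \<in> V" unfolding z_def using assms(1) x(1) by (simp add: subspace_scale)
  ultimately show ?thesis by auto
qed

lemma onb_insert_timelike:
  assumes z0: "B z0 z0 = -1" and F: "onb {w. B w z0 = 0} F"
  shows "onb UNIV (insert z0 F)"
proof -
  have "onb UNIV ({z0} \<union> F)"
  proof (rule onb_union[OF onb_singleton F])
    show "B x y = 0" if "x \<in> span {z0}" "y \<in> {w. B w z0 = 0}" for x y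
      using that by (auto simp: span_singleton B_sym[of z0])
    show "\<exists>x\<in>span {z0}. \<exists>y\<in>{w. B w z0 = 0}. v = x + y" for v
    proof (intro bexI)
      show "v = (- B v z0) *\<^sub>R z0 + (v + B v z0 *\<^sub>R z0)" by simp
      show "(- B v z0) *\<^sub>R z0 \<in> span {z0}" by (rule span_scale) (simp add: span_base)
      show "v + B v z0 *\<^sub>R z0 \<in> {w. B w z0 = 0}" using z0 by simp
    qed
  qed (use z0 in auto)
  then show ?thesis by simp
qed

lemma lorentzian_onb_timelike:
  assumes lor: "lorentzian B" and z0: "B z0 z0 = -1"
  obtains EW where "onb {w. B w z0 = 0} EW" "\<forall>e\<in>EW. B e e = 1" "z0 \<notin> EW"
    "onb UNIV (insert z0 EW)"
proof -
  have sW: "subspace {w. B w z0 = 0}" unfolding subspace_def by simp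
  obtain EW where EW: "onb {w. B w z0 = 0} EW" "\<forall>e\<in>EW. B e e = 1"
    using onb_exists_pos_definite[OF sW lorentzian_orthogonal_timelike_pos_definite[OF lor z0]]
    by auto
  have "z0 \<notin> EW" using onb_subset[OF EW(1)] z0 by force
  then show ?thesis using that EW onb_insert_timelike[OF z0 EW(1)] by auto
qed

lemma subspace_center: "subspace (center br)"
  unfolding subspace_def center_def by simp

lemma center_right: "z \<in> center br \<Longrightarrow> br x z = 0"
  using br_antisym[of x z] by (simp add: center_def)

section \<open>Vanishing of the Einstein constant\<close>

lemma ricci_form_timelike_central:
  assumes z0: "z0 \<in> center br" and EW: "finite EW" "z0 \<notin> EW" "\<forall>e\<in>EW. B e e = 1"
  shows "ricci_form (insert z0 EW) z0 = (\<Sum>e\<in>EW. \<Sum>f\<in>EW. (B (br e f) z0)\<^sup>2) / 4"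
  using EW center_right[OF z0] z0 unfolding ricci_form_def center_def by simp

lemma ricci_timelike_central_nonneg:
  assumes lor: "lorentzian B" and unimodular: "unimodular br"
    and z0: "z0 \<in> center br" "B z0 z0 = -1"
  shows "B (ricci br B z0) z0 \<ge> 0"
proof -
  obtain EW where EW: "\<forall>e\<in>EW. B e e = 1" "z0 \<notin> EW" "onb UNIV (insert z0 EW)"
    using lorentzian_onb_timelike[OF lor z0(2)] by blast
  have "finite EW" using onb_finite[OF EW(3)] by simp
  then have "ricci_form (insert z0 EW) z0 = (\<Sum>e\<in>EW. \<Sum>f\<in>EW. (B (br e f) z0)\<^sup>2) / 4"
    using ricci_form_timelike_central[OF z0(1) _ EW(2,1)] by simp
  moreover have "(\<Sum>e\<in>EW. \<Sum>f\<in>EW. (B (br e f) z0)\<^sup>2) \<ge> 0" by (intro sum_nonneg) auto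
  ultimately show ?thesis using ricci_quadratic_eq_ricci_form_onb[OF EW(3) unimodular] by simp
qed

context
  fixes Ea Er :: "'g set" and z0 :: 'g
  assumes onb_E: "onb UNIV (insert z0 (Ea \<union> Er))"
    and z0: "B z0 z0 = -1" "\<And>y. br z0 y = 0" "z0 \<notin> Ea \<union> Er"
    and disjoint: "Ea \<inter> Er = {}" and finite: "finite Ea" "finite Er"
    and norm: "\<And>e. e \<in> Ea \<union> Er \<Longrightarrow> B e e = 1"
    and Ea_Er: "\<And>x y r. x \<in> Ea \<Longrightarrow> r \<in> Er \<Longrightarrow> B (br x y) r = 0"
    and Ea_Ea: "\<And>x x' w. x \<in> Ea \<Longrightarrow> x' \<in> Ea \<Longrightarrow> w \<in> Ea \<union> Er \<Longrightarrow> B (br x x') w = 0"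
    and Ea_Ea_any: "\<And>x y w. x \<in> Ea \<Longrightarrow> w \<in> Ea \<union> Er \<Longrightarrow> B (br x (br x y)) w = 0"
begin

lemma ricci_form_ideal_basis:
  assumes x: "x \<in> Ea"
  shows "ricci_form (insert z0 (Ea \<union> Er)) x =
    (\<Sum>e\<in>Ea. (B (br x e) z0)\<^sup>2) / 2 + (\<Sum>e\<in>Er. (B (br x e) z0)\<^sup>2) / 2
    + (\<Sum>e\<in>Er. \<Sum>f\<in>Er. (B (br e f) x)\<^sup>2) / 4
    - (\<Sum>e\<in>Er. \<Sum>g\<in>Ea. (B (br x e) g)\<^sup>2) / 2 + (\<Sum>e\<in>Ea. \<Sum>f\<in>Er. (B (br e f) x)\<^sup>2) / 2"
proof -
  define E where "E = insert z0 (Ea \<union> Er)"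
  have z0_right: "br y z0 = 0" for y using z0(2)[of y] br_antisym[of y z0] by simp
  have sum_E: "(\<Sum>e\<in>E. f e) = f z0 + (\<Sum>e\<in>Ea. f e) + (\<Sum>e\<in>Er. f e)" for f :: "'g \<Rightarrow> real"
    unfolding E_def using z0(3) finite disjoint by (simp add: sum.union_disjoint)
  have norm_Ea: "(\<Sum>e\<in>Ea. B e e * f e) = (\<Sum>e\<in>Ea. f e)"
    and norm_Er: "(\<Sum>e\<in>Er. B e e * f e) = (\<Sum>e\<in>Er. f e)" for f :: "'g \<Rightarrow> real"
    using norm by (auto intro: sum.cong)
  have B_sq: "B y y = - (B y z0)\<^sup>2 + (\<Sum>g\<in>Ea. (B y g)\<^sup>2) + (\<Sum>g\<in>Er. (B y g)\<^sup>2)" for y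
    using onb_parseval[OF onb_E, of y y] sum_E[of "\<lambda>g. B g g * B y g * B y g"] z0(1)
      norm_Ea[of "\<lambda>g. B y g * B y g"] norm_Er[of "\<lambda>g. B y g * B y g"]
    unfolding E_def by (simp add: mult.assoc power2_eq_square)
  have Er_zero: "(\<Sum>g\<in>Er. (B (br x e) g)\<^sup>2) = 0" for e
    using Ea_Er[OF x] by (intro sum.neutral) auto
  have Ea_zero: "(\<Sum>g\<in>Ea. (B (br x e) g)\<^sup>2) = 0" if "e \<in> Ea" for e
    using Ea_Ea[OF x that] by (intro sum.neutral) auto
  have Ea_term: "B (br x e) (br x e) = - (B (br x e) z0)\<^sup>2" if "e \<in> Ea" for e
    using B_sq[of "br x e"] Er_zero Ea_zero[OF that] by simp
  have Er_term: "B (br x e) (br x e) = - (B (br x e) z0)\<^sup>2 + (\<Sum>g\<in>Ea. (B (br x e) g)\<^sup>2)" for e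
    using B_sq[of "br x e"] Er_zero by simp
  have "(\<Sum>e\<in>E. B e e * B (br x e) (br x e)) =
      (\<Sum>e\<in>Ea. B (br x e) (br x e)) + (\<Sum>e\<in>Er. B (br x e) (br x e))"
    unfolding sum_E norm_Ea norm_Er by (simp add: z0_right)
  also have "\<dots> = (\<Sum>e\<in>Ea. - (B (br x e) z0)\<^sup>2)
      + (\<Sum>e\<in>Er. - (B (br x e) z0)\<^sup>2 + (\<Sum>g\<in>Ea. (B (br x e) g)\<^sup>2))"
    using Ea_term Er_term by (intro arg_cong2[where f = "(+)"] sum.cong) auto
  finally have first: "(\<Sum>e\<in>E. B e e * B (br x e) (br x e)) =
      - (\<Sum>e\<in>Ea. (B (br x e) z0)\<^sup>2) - (\<Sum>e\<in>Er. (B (br x e) z0)\<^sup>2)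
      + (\<Sum>e\<in>Er. \<Sum>g\<in>Ea. (B (br x e) g)\<^sup>2)"
    by (simp add: sum.distrib sum_negf) (simp add: sum_subtractf)
  have second: "(\<Sum>e\<in>E. B e e * B (br x (br x e)) e) = 0"
    unfolding sum_E norm_Ea norm_Er using Ea_Ea_any[OF x] by (simp add: z0_right)
  have row: "(\<Sum>f\<in>E. B e e * B f f * (B (br e f) x)\<^sup>2) =
      (\<Sum>f\<in>Ea. (B (br e f) x)\<^sup>2) + (\<Sum>f\<in>Er. (B (br e f) x)\<^sup>2)" if "e \<in> Ea \<union> Er" for e
    unfolding sum_E using norm[OF that] norm_Ea norm_Er by (simp add: z0_right mult.assoc)
  have "(\<Sum>e\<in>Ea. \<Sum>f\<in>Ea. (B (br e f) x)\<^sup>2) = 0"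
    using Ea_Ea x by (intro sum.neutral ballI) auto
  moreover have "(\<Sum>e\<in>Er. \<Sum>f\<in>Ea. (B (br e f) x)\<^sup>2) = (\<Sum>e\<in>Ea. \<Sum>f\<in>Er. (B (br e f) x)\<^sup>2)"
  proof -
    have "(B (br e f) x)\<^sup>2 = (B (br f e) x)\<^sup>2" for e f
      by (subst br_antisym) (simp add: power2_eq_square)
    then show ?thesis by (subst sum.swap) simp
  qed
  ultimately have third: "(\<Sum>e\<in>E. \<Sum>f\<in>E. B e e * B f f * (B (br e f) x)\<^sup>2) =
      2 * (\<Sum>e\<in>Ea. \<Sum>f\<in>Er. (B (br e f) x)\<^sup>2) + (\<Sum>e\<in>Er. \<Sum>f\<in>Er. (B (br e f) x)\<^sup>2)"
    unfolding sum_E[of "\<lambda>e. \<Sum>f\<in>E. B e e * B f f * (B (br e f) x)\<^sup>2"]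
    by (simp add: z0(2) row sum.distrib)
  show ?thesis unfolding E_def[symmetric] ricci_form_def first second third by (simp add: field_simps)
qed

text \<open>The negative terms \<open>(B (br x e) g)\<^sup>2\<close> with \<open>e \<in> Er\<close> and \<open>g, x \<in> Ea\<close> reappear, with
  the roles of \<open>x\<close> and \<open>g\<close> exchanged, among the positive terms \<open>(B (br e f) x)\<^sup>2\<close>.\<close>
lemma ricci_form_ideal_basis_sum_nonneg:
  "(\<Sum>x\<in>Ea. ricci_form (insert z0 (Ea \<union> Er)) x) \<ge> 0"
proof -
  have relabel: "(\<Sum>x\<in>Ea. \<Sum>e\<in>Er. \<Sum>g\<in>Ea. (B (br x e) g)\<^sup>2) =
      (\<Sum>x\<in>Ea. \<Sum>e\<in>Ea. \<Sum>f\<in>Er. (B (br e f) x)\<^sup>2)"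
  proof -
    have "(\<Sum>x\<in>Ea. \<Sum>e\<in>Er. \<Sum>g\<in>Ea. (B (br x e) g)\<^sup>2) = (\<Sum>x\<in>Ea. \<Sum>g\<in>Ea. \<Sum>e\<in>Er. (B (br x e) g)\<^sup>2)"
      by (intro sum.cong refl sum.swap)
    also have "\<dots> = (\<Sum>g\<in>Ea. \<Sum>x\<in>Ea. \<Sum>e\<in>Er. (B (br x e) g)\<^sup>2)" by (rule sum.swap)
    finally show ?thesis .
  qed
  have "(\<Sum>x\<in>Ea. ricci_form (insert z0 (Ea \<union> Er)) x) =
      (\<Sum>x\<in>Ea. (\<Sum>e\<in>Ea. (B (br x e) z0)\<^sup>2) / 2 + (\<Sum>e\<in>Er. (B (br x e) z0)\<^sup>2) / 2
        + (\<Sum>e\<in>Er. \<Sum>f\<in>Er. (B (br e f) x)\<^sup>2) / 4)"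
    using relabel
    by (simp add: ricci_form_ideal_basis sum.distrib sum_subtractf sum_divide_distrib[symmetric])
  also have "\<dots> \<ge> 0" by (intro sum_nonneg add_nonneg_nonneg divide_nonneg_nonneg) auto
  finally show ?thesis .
qed

end

context
  fixes J z0
  assumes lor: "lorentzian B" and unimodular: "unimodular br"
    and z0: "z0 \<in> center br" "B z0 z0 = -1"
    and J: "subspace J" "\<And>d y. d \<in> J \<Longrightarrow> br d y \<in> J"
    and JJ: "\<And>d d'. d \<in> J \<Longrightarrow> d' \<in> J \<Longrightarrow> br d d' \<in> span {z0}"
begin

lemma ideal_slice_brackets:
  defines "a \<equiv> {w. B w z0 = 0} \<inter> {d + y | d y. d \<in> J \<and> y \<in> span {z0}}"
  shows "\<And>d. d \<in> J \<Longrightarrow> d + B d z0 *\<^sub>R z0 \<in> a"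
    and "\<And>x y. x \<in> a \<Longrightarrow> br x y + B (br x y) z0 *\<^sub>R z0 \<in> a"
    and "\<And>x x' w. x \<in> a \<Longrightarrow> x' \<in> a \<Longrightarrow> B w z0 = 0 \<Longrightarrow> B (br x x') w = 0"
    and "\<And>x y w. x \<in> a \<Longrightarrow> B w z0 = 0 \<Longrightarrow> B (br x (br x y)) w = 0"
proof -
  have span_central: "y \<in> center br" if "y \<in> span {z0}" for y
    using that span_minimal[of "{z0}" "center br"] subspace_center z0(1) by auto
  have span_perp: "B y w = 0" if "y \<in> span {z0}" "B w z0 = 0" for y w
    using that by (auto simp: span_singleton B_sym[of z0])
  show proj: "d + B d z0 *\<^sub>R z0 \<in> a" if d: "d \<in> J" for d
  proof -
    have "B d z0 *\<^sub>R z0 \<in> span {z0}" by (simp add: span_scale span_base)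
    then show ?thesis unfolding a_def using d z0(2) by auto
  qed
  have a_bracket: "\<exists>d\<in>J. \<forall>v. br x v = br d v \<and> br v x = br v d" if x: "x \<in> a" for x
  proof -
    obtain d c where dc: "x = d + c" "d \<in> J" "c \<in> center br"
      using x span_central unfolding a_def by blast
    have "br c v = 0" "br v c = 0" for v
      using dc(3) center_right[OF dc(3)] unfolding center_def by auto
    then show ?thesis using dc by auto
  qed
  show "br x y + B (br x y) z0 *\<^sub>R z0 \<in> a" if x: "x \<in> a" for x y
  proof -
    obtain d where "d \<in> J" "\<forall>v. br x v = br d v" using a_bracket[OF x] by blast
    then show ?thesis using proj J(2) by simp
  qed
  show "B (br x x') w = 0" if x: "x \<in> a" "x' \<in> a" and w: "B w z0 = 0" for x x' w
  proof -
    obtain d where d: "d \<in> J" "\<forall>v. br x v = br d v" using a_bracket[OF x(1)] by blast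
    obtain d' where d': "d' \<in> J" "\<forall>v. br v x' = br v d'" using a_bracket[OF x(2)] by blast
    have "br x x' \<in> span {z0}" using JJ[OF d(1) d'(1)] d(2) d'(2) by simp
    then show ?thesis using span_perp w by blast
  qed
  show "B (br x (br x y)) w = 0" if x: "x \<in> a" and w: "B w z0 = 0" for x y w
  proof -
    obtain d where d: "d \<in> J" "\<forall>v. br x v = br d v" using a_bracket[OF x] by blast
    have "br x (br x y) \<in> span {z0}" using JJ[OF d(1) J(2)[OF d(1)]] d(2) by simp
    then show ?thesis using span_perp w by blast
  qed
qed

text \<open>The basis spans the Euclidean part \<open>z0\<^sup>\<bottom> \<inter> (J + \<real> z0)\<close>.\<close>
lemma ricci_sum_nonneg_on_ideal:
  assumes d0: "d0 \<in> J" "d0 \<notin> span {z0}"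
  obtains Ea where "finite Ea" "Ea \<noteq> {}" "\<forall>e\<in>Ea. B e e = 1"
    "(\<Sum>x\<in>Ea. B (ricci br B x) x) \<ge> 0"
proof -
  define W where "W = {w. B w z0 = 0}"
  define a where "a = W \<inter> {d + y | d y. d \<in> J \<and> y \<in> span {z0}}"
  note slice = ideal_slice_brackets[folded W_def, folded a_def]
  have sW: "subspace W" unfolding W_def subspace_def by simp
  have pW: "pos_definite_on B W"
    unfolding W_def by (rule lorentzian_orthogonal_timelike_pos_definite[OF lor z0(2)])
  have sa: "subspace a"
    unfolding a_def by (rule subspace_inter[OF sW subspace_sums[OF J(1) subspace_span]])
  have pa: "pos_definite_on B a" using pW by (rule pos_definite_on_subset) (auto simp: a_def)
  obtain Ea where Ea: "onb a Ea" "\<forall>e\<in>Ea. B e e = 1" using onb_exists_pos_definite[OF sa pa] by auto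
  obtain Er where Er: "onb {w \<in> W. \<forall>u\<in>a. B w u = 0} Er" "\<forall>e\<in>Er. B e e = 1" "onb W (Ea \<union> Er)"
    using onb_extend_pos_definite[OF sW pW Ea(1) _ sa] by (auto simp: a_def)
  have Ea_a: "e \<in> W" "e \<in> a" if "e \<in> Ea" for e using that onb_subset[OF Ea(1)] by (auto simp: a_def)
  have Er_W: "e \<in> W" "\<forall>u\<in>a. B e u = 0" if "e \<in> Er" for e using that onb_subset[OF Er(1)] by auto
  have "Ea \<noteq> {}"
  proof
    assume "Ea = {}"
    then have "d0 + B d0 z0 *\<^sub>R z0 = 0" using onb_expansion[OF Ea(1) slice(1)[OF d0(1)]] by simp
    then have "d0 = (- B d0 z0) *\<^sub>R z0" by (simp add: eq_neg_iff_add_eq_0)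
    then show False using d0(2) by (metis span_base span_scale singletonI)
  qed
  have E: "onb UNIV (insert z0 (Ea \<union> Er))"
    using onb_insert_timelike[OF z0(2) Er(3)[unfolded W_def]] .
  have "0 \<le> (\<Sum>x\<in>Ea. ricci_form (insert z0 (Ea \<union> Er)) x)"
  proof (rule ricci_form_ideal_basis_sum_nonneg[OF E z0(2)])
    show "br z0 y = 0" for y using z0(1) by (simp add: center_def)
    show "z0 \<notin> Ea \<union> Er" using Ea_a Er_W z0(2) unfolding W_def by force
    show "Ea \<inter> Er = {}" by (rule onb_disjoint[OF Ea(1) Er(1)]) (auto simp: B_sym)
    show "finite Ea" "finite Er" using onb_finite Ea Er by auto
    show "B e e = 1" if "e \<in> Ea \<union> Er" for e using that Ea(2) Er(2) by auto
    show "B (br x y) r = 0" if x: "x \<in> Ea" and r: "r \<in> Er" for x y r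
    proof -
      have "B r (br x y + B (br x y) z0 *\<^sub>R z0) = 0" using Er_W(2)[OF r] slice(2) Ea_a(2)[OF x] by blast
      moreover have "B r z0 = 0" using Er_W(1)[OF r] unfolding W_def by simp
      ultimately show ?thesis by (simp add: B_sym[of r])
    qed
    show "B (br x x') w = 0" if "x \<in> Ea" "x' \<in> Ea" "w \<in> Ea \<union> Er" for x x' w
      using slice(3) Ea_a Er_W that unfolding W_def by blast
    show "B (br x (br x y)) w = 0" if "x \<in> Ea" "w \<in> Ea \<union> Er" for x y w
      using slice(4) Ea_a Er_W that unfolding W_def by blast
  qed
  also have "\<dots> = (\<Sum>x\<in>Ea. B (ricci br B x) x)"
    using ricci_quadratic_eq_ricci_form_onb[OF E unimodular] by simp
  finally show ?thesis using that onb_finite[OF Ea(1)] \<open>Ea \<noteq> {}\<close> Ea(2) by blast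
qed

end

lemma einstein_constant_nonneg:
  assumes lor: "lorentzian B" and solvable: "solvable br" and unimodular: "unimodular br"
    and c: "\<And>u. B (ricci br B u) u = c * B u u"
    and z0: "z0 \<in> center br" "B z0 z0 = -1"
  shows "c \<ge> 0"
proof (rule ccontr)
  assume "\<not> c \<ge> 0"
  then have c_neg: "c < 0" by simp
  obtain EW where EW: "onb {w. B w z0 = 0} EW" "\<forall>e\<in>EW. B e e = 1" "z0 \<notin> EW"
    "onb UNIV (insert z0 EW)"
    using lorentzian_onb_timelike[OF lor z0(2)] by blast
  have "EW \<noteq> {}"
  proof
    assume "EW = {}"
    then have "B (ricci br B z0) z0 = 0"
      using ricci_quadratic_eq_ricci_form_onb[OF EW(4) unimodular]
        ricci_form_timelike_central[OF z0(1), of "{}"] by simp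
    then show False using c[of z0] z0(2) c_neg by simp
  qed
  then obtain w0 where w0: "w0 \<in> EW" by auto
  have "w0 \<notin> span {z0}"
  proof
    assume "w0 \<in> span {z0}"
    then obtain t where "w0 = t *\<^sub>R z0" by (auto simp: span_singleton)
    then show False using w0 EW(2) onb_subset[OF EW(1) w0] z0(2) by auto
  qed
  then have "\<not> derived_series_on UNIV 0 \<subseteq> span {z0}" by auto
  moreover obtain N where "derived_series_on UNIV N = {0}"
    using solvable unfolding solvable_def derived_series_eq_on_UNIV by auto
  then have "\<exists>N. derived_series_on UNIV N \<subseteq> span {z0}" by (intro exI[of _ N]) (simp add: span_zero)
  ultimately obtain m where m: "\<not> derived_series_on UNIV m \<subseteq> span {z0}"
    "derived_series_on UNIV (Suc m) \<subseteq> span {z0}"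
    using exists_least_lemma[where P = "\<lambda>k. derived_series_on UNIV k \<subseteq> span {z0}"] by blast
  then obtain d0 where d0: "d0 \<in> derived_series_on UNIV m" "d0 \<notin> span {z0}" by auto
  obtain Ea where Ea: "finite Ea" "Ea \<noteq> {}" "\<forall>e\<in>Ea. B e e = 1"
    "(\<Sum>x\<in>Ea. B (ricci br B x) x) \<ge> 0"
  proof (rule ricci_sum_nonneg_on_ideal[OF lor unimodular z0 _ _ _ d0])
    show "subspace (derived_series_on UNIV m)" by (cases m) (simp_all add: subspace_UNIV)
    show "br d y \<in> derived_series_on UNIV m" if "d \<in> derived_series_on UNIV m" for d y
      using derived_series_ideal_left[OF that] .
    show "br d d' \<in> span {z0}" if "d \<in> derived_series_on UNIV m" "d' \<in> derived_series_on UNIV m"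
      for d d' using m(2) that by (auto intro: span_base)
  qed
  have "(\<Sum>x\<in>Ea. B (ricci br B x) x) = c * card Ea" using c Ea(3) by simp
  also have "\<dots> < 0" using c_neg Ea(1,2) by (simp add: mult_neg_pos card_gt_0_iff)
  finally show False using Ea(4) by simp
qed

section \<open>Flatness\<close>

lemma ricci_flat_brackets_orthogonal_center:
  assumes lor: "lorentzian B" and unimodular: "unimodular br"
    and ricci_flat: "\<And>u. B (ricci br B u) u = 0"
    and z0: "z0 \<in> center br" "B z0 z0 = -1"
  shows "B (br x y) z0 = 0"
proof -
  obtain EW where EW: "\<forall>e\<in>EW. B e e = 1" "z0 \<notin> EW" "onb UNIV (insert z0 EW)"
    using lorentzian_onb_timelike[OF lor z0(2)] by blast
  define E where "E = insert z0 EW"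
  have fin: "finite EW" using onb_finite[OF EW(3)] by simp
  have "(\<Sum>e\<in>EW. \<Sum>f\<in>EW. (B (br e f) z0)\<^sup>2) = 0"
    using ricci_form_timelike_central[OF z0(1) fin EW(2,1)] ricci_flat[of z0]
      ricci_quadratic_eq_ricci_form_onb[OF EW(3) unimodular] by simp
  then have "\<forall>e\<in>EW. \<forall>f\<in>EW. (B (br e f) z0)\<^sup>2 = 0"
    using fin by (simp add: sum_nonneg_eq_0_iff sum_nonneg)
  then have basis: "B (br e f) z0 = 0" if "e \<in> E" "f \<in> E" for e f
    using that z0(1) center_right[OF z0(1)] unfolding E_def center_def by auto
  have "B (br x y) z0 =
      B (br (\<Sum>e\<in>E. (B e e * B x e) *\<^sub>R e) (\<Sum>f\<in>E. (B f f * B y f) *\<^sub>R f)) z0"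
    using onb_expansion[OF EW(3), of x] onb_expansion[OF EW(3), of y] unfolding E_def by simp
  also have "\<dots> = 0" by (simp add: basis)
  finally show ?thesis .
qed

lemma derived_series_on_orthogonal_central:
  assumes z0: "z0 \<in> center br" "B z0 z0 = -1"
  shows "derived_series_on {w. B w z0 = 0} (Suc j) = derived_series_on UNIV (Suc j)"
proof (induction j)
  case 0
  have "br x y = br (x + B x z0 *\<^sub>R z0) (y + B y z0 *\<^sub>R z0)" for x y
    using z0(1) center_right[OF z0(1)] by (simp add: center_def)
  moreover have "x + B x z0 *\<^sub>R z0 \<in> {w. B w z0 = 0}" for x using z0(2) by simp
  ultimately have "{br x y | x y. x \<in> {w. B w z0 = 0} \<and> y \<in> {w. B w z0 = 0}} =
      {br x y | x y. x \<in> UNIV \<and> y \<in> UNIV}"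
    by blast
  then show ?case by simp
next
  case (Suc j)
  then show ?case by (simp only: derived_series_on.simps(2))
qed

text \<open>For a Ricci-flat algebra the brackets lie in the Euclidean space \<open>z0\<^sup>\<bottom>\<close>, which is
  therefore a Ricci-flat Euclidean unimodular solvable subalgebra.\<close>
lemma ricci_flat_orthogonal_timelike:
  fixes z0
  defines "W \<equiv> {w. B w z0 = 0}"
  assumes lor: "lorentzian B" and solvable: "solvable br" and unimodular: "unimodular br"
    and ricci_flat: "\<And>u. B (ricci br B u) u = 0"
    and z0: "z0 \<in> center br" "B z0 z0 = -1"
  shows "abelian_on br (derived_series_on W (Suc 0)) \<and>
    (\<forall>u\<in>W. (\<forall>d\<in>derived_series_on W (Suc 0). B u d = 0) \<longrightarrow>
      (\<forall>v\<in>W. \<forall>w\<in>W. B (br u v) w = - B v (br u w)))"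
proof -
  have sW: "subspace W" unfolding W_def subspace_def by simp
  have pW: "pos_definite_on B W"
    unfolding W_def by (rule lorentzian_orthogonal_timelike_pos_definite[OF lor z0(2)])
  have z0_left: "br z0 y = 0" for y using z0(1) by (simp add: center_def)
  have z0_right: "br y z0 = 0" for y using center_right[OF z0(1)] .
  obtain EW where EW: "onb W EW" "\<forall>e\<in>EW. B e e = 1" "z0 \<notin> EW" "onb UNIV (insert z0 EW)"
    using lorentzian_onb_timelike[OF lor z0(2)] unfolding W_def by blast
  have fin: "finite EW" using onb_finite[OF EW(1)] .
  have brW: "br x y \<in> W" for x y
    unfolding W_def using ricci_flat_brackets_orthogonal_center[OF lor unimodular ricci_flat z0] by simp
  have trace_W: "(\<Sum>e\<in>EW. B (br x e) e) = 0" for x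
  proof -
    interpret lie_algebra_onb br B "insert z0 EW" by unfold_locales (rule EW(4))
    have "trace (br x) = (\<Sum>e\<in>insert z0 EW. B e e * B (br x e) e)"
      by (rule trace_eq_onb_sum[OF linear_br])
    also have "\<dots> = (\<Sum>e\<in>EW. B (br x e) e)"
      using fin EW(3) by (simp add: z0_right onb_pos_definite_sum[OF EW(1) pW])
    finally show ?thesis using unimodular unfolding unimodular_def by simp
  qed
  obtain k where k: "derived_series_on W k = {0}"
  proof -
    obtain N where N: "derived_series_on UNIV N = {0}"
      using solvable unfolding solvable_def derived_series_eq_on_UNIV by auto
    show ?thesis
    proof (cases N)
      case 0
      then have "W = {0}" using N sW subspace_0 by auto
      then show ?thesis using that[of 0] by simp
    next
      case (Suc j)
      then show ?thesis
        using that[of N] N derived_series_on_orthogonal_central[OF z0, of j] unfolding W_def by simp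
    qed
  qed
  have ricci_W: "euclidean_ricci_form EW x = 0" if "x \<in> W" for x
  proof -
    have "euclidean_ricci_form EW x = ricci_form (insert z0 EW) x"
      using ricci_form_eq_euclidean[OF EW(1) pW] fin EW(3) z0_left z0_right
      unfolding ricci_form_def by simp
    also have "\<dots> = 0" using ricci_quadratic_eq_ricci_form_onb[OF EW(4) unimodular] ricci_flat by simp
    finally show ?thesis .
  qed
  show ?thesis by (rule alekseevskii_kimelfeld[OF sW pW _ EW(1) trace_W k ricci_W]) (use brW in auto)
qed

text \<open>Projecting along the central vector \<open>z0\<close> transfers the skewness from \<open>z0\<^sup>\<bottom>\<close> to the
  whole algebra.\<close>
lemma ricci_flat_derived_structure:
  fixes z0
  defines "D \<equiv> span {br x y | x y. True}"
  assumes lor: "lorentzian B" and solvable: "solvable br" and unimodular: "unimodular br"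
    and ricci_flat: "\<And>u. B (ricci br B u) u = 0"
    and z0: "z0 \<in> center br" "B z0 z0 = -1"
  shows "abelian_on br D" "D \<subseteq> {w. B w z0 = 0}"
    "\<And>u v w. \<forall>d\<in>D. B u d = 0 \<Longrightarrow> B (br u v) w = - B v (br u w)"
proof -
  define W where "W = {w. B w z0 = 0}"
  define pr where "pr x = x + B x z0 *\<^sub>R z0" for x
  have prW: "pr x \<in> W" for x unfolding pr_def W_def using z0(2) by simp
  have br_pr: "br x y = br (pr x) (pr y)" for x y
    unfolding pr_def using z0(1) center_right[OF z0(1)] by (simp add: center_def)
  have brW: "br x y \<in> W" for x y
    unfolding W_def using ricci_flat_brackets_orthogonal_center[OF lor unimodular ricci_flat z0] by simp
  have B_pr: "B y (pr w) = B y w" if "y \<in> W" for y w using that unfolding pr_def W_def by simp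
  have D_eq: "D = derived_series_on W (Suc 0)"
    using derived_series_on_orthogonal_central[OF z0, of 0] unfolding D_def W_def by simp
  have D_W: "D \<subseteq> W"
    unfolding D_def by (rule span_minimal) (use brW in \<open>auto simp: W_def subspace_def\<close>)
  note AK = ricci_flat_orthogonal_timelike[OF lor solvable unimodular ricci_flat z0,
      folded W_def D_eq]
  then show "abelian_on br D" by simp
  show "D \<subseteq> {w. B w z0 = 0}" using D_W unfolding W_def .
  show "B (br u v) w = - B v (br u w)" if u: "\<forall>d\<in>D. B u d = 0" for u v w
  proof -
    have "\<forall>d\<in>D. B (pr u) d = 0" using u D_W unfolding pr_def W_def by (auto simp: B_sym[of z0])
    then have skew_pr: "B (br (pr u) (pr v)) (pr w) = - B (pr v) (br (pr u) (pr w))"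
      using AK prW by blast
    have "B (br u v) w = B (br (pr u) (pr v)) (pr w)" using br_pr[of u v] B_pr[OF brW] by simp
    also have "\<dots> = - B (pr v) (br (pr u) (pr w))" by (rule skew_pr)
    also have "B (pr v) (br (pr u) (pr w)) = B v (br u w)"
      using B_pr[OF brW, of "pr u" "pr w" v] br_pr[of u w] by (simp add: B_sym)
    finally show ?thesis .
  qed
qed

end

context lie_algebra_onb
begin

context
  fixes D
  assumes D: "subspace D" "pos_definite_on B D" "\<And>x y. br x y \<in> D" "abelian_on br D"
    and skew: "\<And>u v w. \<forall>d\<in>D. B u d = 0 \<Longrightarrow> B (br u v) w = - B v (br u w)"
begin

lemma orthogonal_derived_commute:
  assumes "\<forall>d\<in>D. B u d = 0" "\<forall>d\<in>D. B u' d = 0"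
  shows "br u u' = 0"
proof (rule onb_UNIV_eq_0[OF onb_UNIV])
  fix w
  have "B (br u u') w = - B u' (br u w)" using skew assms(1) by blast
  also have "B u' (br u w) = 0" using assms(2) D(3) by blast
  finally show "B (br u u') w = 0" by simp
qed

lemma orthogonal_derived_split: "\<exists>p q. v = p + q \<and> p \<in> D \<and> (\<forall>d\<in>D. B q d = 0)"
proof -
  obtain ED where ED: "onb D ED" using onb_exists_pos_definite[OF D(1,2)] by auto
  obtain q p where "v = q + p" "\<forall>u\<in>D. B q u = 0" "p \<in> D"
    using orthogonal_decomposition[OF ED D(1) subspace_UNIV subset_UNIV UNIV_I, of v] by blast
  then show ?thesis by (intro exI[of _ p] exI[of _ q]) (auto simp: add.commute)
qed

lemma LC_orthogonal_derived:
  assumes u: "\<forall>d\<in>D. B u d = 0"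
  shows "L u = br u"
proof
  fix v
  show "L u v = br u v"
  proof (rule onb_UNIV_eqI[OF onb_UNIV])
    fix w
    have "B u (br w v) = 0" using u D(3) by blast
    then have "B (br w v) u = 0" by (simp add: B_sym)
    moreover have "B (br w u) v = B (br u v) w"
      using skew[OF u, of w v] br_antisym[of w u] by (simp add: B_sym[of w])
    ultimately show "B (L u v) w = B (br u v) w" unfolding LC_inner by simp
  qed
qed

lemma LC_derived:
  assumes u: "u \<in> D"
  shows "L u = (\<lambda>v. 0)"
proof
  fix v
  show "L u v = 0"
  proof (rule onb_UNIV_eq_0[OF onb_UNIV])
    fix w
    obtain vD vA where v: "v = vD + vA" "vD \<in> D" "\<forall>d\<in>D. B vA d = 0"
      using orthogonal_derived_split by blast
    obtain wD wA where w: "w = wD + wA" "wD \<in> D" "\<forall>d\<in>D. B wA d = 0"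
      using orthogonal_derived_split by blast
    have "br u vD = 0" "br wD u = 0" "br wD vD = 0"
      using D(4) u v w unfolding abelian_on_def by auto
    moreover have "br wA vA = 0" using orthogonal_derived_commute v(3) w(3) by blast
    moreover have "B (br u vA) wA = 0" "B (br wA u) vA = 0"
      using D(3) v(3) w(3) by (auto simp: B_sym)
    moreover have "B (br vA u) wD = - B u (br vA wD)" "B (br wA u) vD = - B u (br wA vD)"
      using skew v(3) w(3) by auto
    ultimately have "B (br u v) w + B (br w u) v + B (br w v) u = 0"
      unfolding v(1) w(1)
      by (simp add: br_antisym[of vA u] br_antisym[of vA wD] B_sym[of u] algebra_simps)
    then show "B (L u v) w = 0" unfolding LC_inner by simp
  qed
qed

lemma flat_of_abelian_derived:
  "flat br B \<and>
     (\<exists>bI aS. lie_ideal br bI \<and> abelian_on br bI \<and>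
        lie_subalgebra br aS \<and> abelian_on br aS \<and>
        bI \<inter> aS = {0} \<and> {x + y | x y. x \<in> bI \<and> y \<in> aS} = UNIV \<and>
        (\<forall>u\<in>aS. LC br B u = br u) \<and> (\<forall>u\<in>bI. LC br B u = (\<lambda>v. 0)))"
proof -
  define A where "A = {u. \<forall>d\<in>D. B u d = 0}"
  have sA: "subspace A" unfolding A_def subspace_def by simp
  have L_split: "L x y = br xA y" if "x = xD + xA" "xD \<in> D" "xA \<in> A" for x xD xA y
    using that LC_derived LC_orthogonal_derived unfolding A_def by simp
  have "flat br B"
    unfolding flat_def curv_def
  proof (intro allI)
    fix u v w
    obtain uD uA where u: "u = uD + uA" "uD \<in> D" "uA \<in> A"
      using orthogonal_derived_split unfolding A_def by blast
    obtain vD vA where v: "v = vD + vA" "vD \<in> D" "vA \<in> A"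
      using orthogonal_derived_split unfolding A_def by blast
    have "br uA vA = 0" using orthogonal_derived_commute u(3) v(3) unfolding A_def by blast
    then have "br uA (br vA w) - br vA (br uA w) = 0"
      using jacobi[of uA vA w] br_antisym[of w uA] by simp
    then show "L (br u v) w - (L u (L v w) - L v (L u w)) = 0"
      using LC_derived[OF D(3)] L_split[OF u] L_split[OF v] by simp
  qed
  moreover have "D \<inter> A = {0}"
    using D(2) subspace_0[OF D(1)] subspace_0[OF sA] unfolding A_def pos_definite_on_def by force
  moreover have "lie_ideal br D" "abelian_on br D" "lie_subalgebra br A" "abelian_on br A"
    using D sA orthogonal_derived_commute subspace_0[OF sA]
    unfolding A_def lie_ideal_def lie_subalgebra_def abelian_on_def by auto
  moreover have "{x + y | x y. x \<in> D \<and> y \<in> A} = UNIV"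
    using orthogonal_derived_split unfolding A_def by blast
  ultimately show ?thesis using LC_derived LC_orthogonal_derived unfolding A_def by blast
qed

end

end

theorem proposition3p3:
  fixes br :: "'g::euclidean_space \<Rightarrow> 'g \<Rightarrow> 'g"
    and B :: "'g \<Rightarrow> 'g \<Rightarrow> real"
  assumes "lie_algebra br"
    and "lorentzian B"
    and "solvable br"
    and "unimodular br"
    and "einstein br B"
    and "nondegenerate_on B (center br)"
  shows "pos_definite_on B (center br) \<or>
    (flat br B \<and>
     (\<exists>bI aS. lie_ideal br bI \<and> abelian_on br bI \<and>
        lie_subalgebra br aS \<and> abelian_on br aS \<and>
        bI \<inter> aS = {0} \<and> {x + y | x y. x \<in> bI \<and> y \<in> aS} = UNIV \<and>
        (\<forall>u\<in>aS. LC br B u = br u) \<and> (\<forall>u\<in>bI. LC br B u = (\<lambda>v. 0))))"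
proof (cases "pos_definite_on B (center br)")
  case False
  interpret lie_algebra_with_form br B
    by unfold_locales (use assms(1,2) in \<open>auto simp: lorentzian_def\<close>)
  obtain z0 where z0: "z0 \<in> center br" "B z0 z0 = -1"
    using exists_timelike_unit[OF subspace_center assms(6) False] by blast
  obtain c where "\<And>u. ricci br B u = c *\<^sub>R u" using assms(5) unfolding einstein_def by blast
  then have c: "B (ricci br B u) u = c * B u u" for u by simp
  have "c \<le> 0" using ricci_timelike_central_nonneg[OF assms(2,4) z0] c[of z0] z0(2) by simp
  moreover have "c \<ge> 0" by (rule einstein_constant_nonneg[OF assms(2,3,4) c z0])
  ultimately have ricci_flat: "B (ricci br B u) u = 0" for u using c by simp
  define D where "D = span {br x y | x y. True}"
  note D = ricci_flat_derived_structure[OF assms(2,3,4) ricci_flat z0, folded D_def]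
  have "pos_definite_on B D"
    using lorentzian_orthogonal_timelike_pos_definite[OF assms(2) z0(2)] D(2)
    by (rule pos_definite_on_subset)
  moreover have "br x y \<in> D" for x y unfolding D_def by (blast intro: span_base)
  moreover obtain EW where "onb UNIV (insert z0 EW)"
    using lorentzian_onb_timelike[OF assms(2) z0(2)] by blast
  ultimately show ?thesis
    using lie_algebra_onb.flat_of_abelian_derived[of br B "insert z0 EW" D] D(1,3)
    unfolding lie_algebra_onb_def lie_algebra_onb_axioms_def D_def
    by (simp add: lie_algebra_with_form_axioms)
qed simp

end
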